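(* Let $R$ be a Noetherian local ring, $F=\{J_n\}_{n\ge0}$ a Noetherian filtration of ideals and $I$ an ideal of $R$. Then $\operatorname{ar}_F(I)=d(\operatorname{in}_F(I))$.
   Context: A filtration $F=\{J_n\}$ satisfies $J_0=R$, $J_m\subseteq J_n$ for $m>n$, $J_mJ_n\subseteq J_{m+n}$; it is Noetherian if $\Re_F(R)=\bigoplus_nJ_n$ is Noetherian. $\operatorname{gr}_F(R)=\bigoplus_nJ_n/J_{n+1}$; for $0\ne f\in J_n\setminus J_{n+1}$, $f^*$ is its class in $J_n/J_{n+1}$, $0^*=0$, and $\operatorname{in}_F(I)$ is the ideal of $\operatorname{gr}_F(R)$ generated by $f^*$, $f\in I$. For a graded ideal $Q$, $d(Q)$ is the maximum degree of the elements of a minimal homogeneous generating set of $Q$. $\operatorname{ar}_F(I)=d\big(\bigoplus_n(J_n\cap I)\big)$, computed in $\Re_F(R)$. *)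

theory Defs
  imports "HOL-Computational_Algebra.Polynomial" "HOL-Library.Set_Algebras"
begin

definition is_ideal :: "'a::comm_ring_1 set \<Rightarrow> bool" where
  "is_ideal I \<longleftrightarrow> 0 \<in> I \<and> (\<forall>x\<in>I. \<forall>y\<in>I. x + y \<in> I) \<and> (\<forall>r x. x \<in> I \<longrightarrow> r * x \<in> I)"

definition sub_gen :: "'b::comm_ring_1 set \<Rightarrow> 'b set \<Rightarrow> 'b set" where
  "sub_gen S G = {x. \<exists>G' c. finite G' \<and> G' \<subseteq> G \<and> (\<forall>g\<in>G'. c g \<in> S) \<and> x = (\<Sum>g\<in>G'. c g * g)}"

definition sub_ideal :: "'b::comm_ring_1 set \<Rightarrow> 'b set \<Rightarrow> bool" where
  "sub_ideal S A \<longleftrightarrow> A \<subseteq> S \<and> 0 \<in> A \<and> (\<forall>x\<in>A. \<forall>y\<in>A. x + y \<in> A)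
     \<and> (\<forall>r\<in>S. \<forall>x\<in>A. r * x \<in> A)"

definition noetherian_sub :: "'b::comm_ring_1 set \<Rightarrow> bool" where
  "noetherian_sub S \<longleftrightarrow> (\<forall>A. sub_ideal S A \<longrightarrow> (\<exists>G. finite G \<and> G \<subseteq> A \<and> sub_gen S G = A))"

definition noetherian_ring :: "'a::comm_ring_1 itself \<Rightarrow> bool" where
  "noetherian_ring _ \<longleftrightarrow> noetherian_sub (UNIV :: 'a set)"

definition maximal_ideal :: "'a::comm_ring_1 set \<Rightarrow> bool" where
  "maximal_ideal m \<longleftrightarrow> is_ideal m \<and> m \<noteq> UNIV \<and>
     (\<forall>I. is_ideal I \<longrightarrow> m \<subseteq> I \<longrightarrow> I = m \<or> I = UNIV)"

definition local_ring :: "'a::comm_ring_1 itself \<Rightarrow> bool" where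
  "local_ring _ \<longleftrightarrow> (\<exists>!m::'a set. maximal_ideal m)"

definition filtration :: "(nat \<Rightarrow> 'a::comm_ring_1 set) \<Rightarrow> bool" where
  "filtration J \<longleftrightarrow> (\<forall>n. is_ideal (J n)) \<and> J 0 = UNIV \<and> (\<forall>m n. n < m \<longrightarrow> J m \<subseteq> J n)
     \<and> (\<forall>m n x y. x \<in> J m \<longrightarrow> y \<in> J n \<longrightarrow> x * y \<in> J (m + n))"

text \<open>Rees algebra R_F(R) = (+)_n J_n t^n, as a subring of R[t].\<close>
definition rees :: "(nat \<Rightarrow> 'a::comm_ring_1 set) \<Rightarrow> 'a poly set" where
  "rees J = {p. \<forall>n. coeff p n \<in> J n}"

definition noetherian_filtration :: "(nat \<Rightarrow> 'a::comm_ring_1 set) \<Rightarrow> bool" where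
  "noetherian_filtration J \<longleftrightarrow> filtration J \<and> noetherian_sub (rees J)"

definition rees_part :: "(nat \<Rightarrow> 'a::comm_ring_1 set) \<Rightarrow> 'a set \<Rightarrow> 'a poly set" where
  "rees_part J I = {p \<in> rees J. \<forall>n. coeff p n \<in> I}"

definition rees_min_hgens :: "(nat \<Rightarrow> 'a::comm_ring_1 set) \<Rightarrow> 'a poly set \<Rightarrow> 'a poly set \<Rightarrow> bool" where
  "rees_min_hgens J A G \<longleftrightarrow> G \<subseteq> A \<and> (\<forall>g\<in>G. g \<noteq> 0 \<and> (\<exists>c n. g = monom c n))
     \<and> sub_gen (rees J) G = A \<and> (\<forall>G'. G' \<subset> G \<longrightarrow> sub_gen (rees J) G' \<noteq> A)"

definition d_rees :: "(nat \<Rightarrow> 'a::comm_ring_1 set) \<Rightarrow> 'a poly set \<Rightarrow> nat" where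
  "d_rees J A = (let G = (SOME G. rees_min_hgens J A G) in
      if G = {} then 0 else Max (degree ` G))"

definition ar :: "(nat \<Rightarrow> 'a::comm_ring_1 set) \<Rightarrow> 'a set \<Rightarrow> nat" where
  "ar J I = d_rees J (rees_part J I)"

text \<open>An element is a family of cosets g n \<in> J_n/J_(n+1), almost all zero (= J_(n+1)).\<close>
definition gr :: "(nat \<Rightarrow> 'a::comm_ring_1 set) \<Rightarrow> (nat \<Rightarrow> 'a set) set" where
  "gr J = {g. (\<forall>n. \<exists>x\<in>J n. g n = x +o J (Suc n)) \<and> finite {n. g n \<noteq> J (Suc n)}}"

definition gr_zero :: "(nat \<Rightarrow> 'a::comm_ring_1 set) \<Rightarrow> nat \<Rightarrow> 'a set" where
  "gr_zero J = (\<lambda>n. J (Suc n))"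

definition gr_mul :: "(nat \<Rightarrow> 'a::comm_ring_1 set) \<Rightarrow> (nat \<Rightarrow> 'a set) \<Rightarrow> (nat \<Rightarrow> 'a set) \<Rightarrow> nat \<Rightarrow> 'a set" where
  "gr_mul J g h = (\<lambda>n. (\<Sum>i\<le>n. g i * h (n - i)) + J (Suc n))"

definition gr_gen :: "(nat \<Rightarrow> 'a::comm_ring_1 set) \<Rightarrow> (nat \<Rightarrow> 'a set) set \<Rightarrow> (nat \<Rightarrow> 'a set) set" where
  "gr_gen J T = {x. \<exists>T' c. finite T' \<and> T' \<subseteq> T \<and> (\<forall>t\<in>T'. c t \<in> gr J)
      \<and> x = (\<lambda>n. (\<Sum>t\<in>T'. gr_mul J (c t) t n) + J (Suc n))}"

text \<open>Initial form f^*: the class of f in J_n/J_(n+1) where f \<in> J_n - J_(n+1);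
  0^* = 0, and (convention) f^* = 0 if f lies in every J_n.\<close>
definition initial :: "(nat \<Rightarrow> 'a::comm_ring_1 set) \<Rightarrow> 'a \<Rightarrow> nat \<Rightarrow> 'a set" where
  "initial J f = (if \<forall>n. f \<in> J n then gr_zero J
     else (let n = (LEAST n. f \<notin> J (Suc n)) in
           (\<lambda>m. if m = n then f +o J (Suc n) else J (Suc m))))"

definition in_F :: "(nat \<Rightarrow> 'a::comm_ring_1 set) \<Rightarrow> 'a set \<Rightarrow> (nat \<Rightarrow> 'a set) set" where
  "in_F J I = gr_gen J (initial J ` I)"

definition gr_homog :: "(nat \<Rightarrow> 'a::comm_ring_1 set) \<Rightarrow> (nat \<Rightarrow> 'a set) \<Rightarrow> nat \<Rightarrow> bool" where
  "gr_homog J g d \<longleftrightarrow> g \<in> gr J \<and> (\<forall>m. m \<noteq> d \<longrightarrow> g m = J (Suc m))"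

definition gr_deg :: "(nat \<Rightarrow> 'a::comm_ring_1 set) \<Rightarrow> (nat \<Rightarrow> 'a set) \<Rightarrow> nat" where
  "gr_deg J g = (LEAST d. g d \<noteq> J (Suc d))"

definition gr_min_hgens :: "(nat \<Rightarrow> 'a::comm_ring_1 set) \<Rightarrow> (nat \<Rightarrow> 'a set) set \<Rightarrow> (nat \<Rightarrow> 'a set) set \<Rightarrow> bool" where
  "gr_min_hgens J Q H \<longleftrightarrow> H \<subseteq> Q \<and> (\<forall>h\<in>H. h \<noteq> gr_zero J \<and> (\<exists>d. gr_homog J h d))
     \<and> gr_gen J H = Q \<and> (\<forall>H'. H' \<subset> H \<longrightarrow> gr_gen J H' \<noteq> Q)"

definition d_gr :: "(nat \<Rightarrow> 'a::comm_ring_1 set) \<Rightarrow> (nat \<Rightarrow> 'a set) set \<Rightarrow> nat" where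
  "d_gr J Q = (let H = (SOME H. gr_min_hgens J Q H) in
      if H = {} then 0 else Max (gr_deg J ` H))"

end

theory Submission
  imports Defs
begin

text \<open>
  Let (R, m) be the local ring, N = (+)_n (J_n \<inter> I) t^n the ideal of the Rees algebra whose
  generator degrees define ar_F(I), and M = m + (+)_(k \<ge> 1) J_k t^k the homogeneous maximal
  ideal of the Rees algebra. By graded Nakayama, every minimal homogeneous generating set of N
  consists of generators in exactly the degrees n with N_n \<noteq> (M N)_n, where
  (M N)_n = m N_n + \<Sum>_(1 \<le> k \<le> n) J_k N_(n-k). Since in_F(I) is the image of N in
  gr_F(R) = R_F(R) / (+)_n J_(n+1) t^n, the same argument modulo J_(n+1) shows that every minimal
  homogeneous generating set of in_F(I) lives in exactly the degrees n with
  N_n not contained in (M N)_n + J_(n+1). In particular neither invariant depends on the choice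
  of the minimal generating set.

  The second degree set is contained in the first, and they have the same maximum: if
  N_k \<subseteq> (M N)_k + J_(k+1) for all k \<ge> n, then N_n \<subseteq> (M N)_n + N_(n+j) for all j, since
  (M N)_k decreases in k as soon as J_1 \<subseteq> m; for j large, N_(n+j) = (M N)_(n+j) \<subseteq> (M N)_n,
  so n is not in the first set either. If J_1 = R, then every J_n = R and both invariants are 0.
\<close>

section \<open>Ideals, submodules and cosets\<close>

definition submodule_of :: "'b::comm_ring_1 set \<Rightarrow> 'b set \<Rightarrow> bool" where
  "submodule_of S A \<longleftrightarrow> 0 \<in> A \<and> (\<forall>x\<in>A. \<forall>y\<in>A. x + y \<in> A) \<and> (\<forall>r\<in>S. \<forall>x\<in>A. r * x \<in> A)"

lemma is_ideal_iff_submodule_of: "is_ideal I \<longleftrightarrow> submodule_of UNIV I"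
  unfolding is_ideal_def submodule_of_def by blast

lemma submodule_of_sum:
  assumes "submodule_of S A" "\<And>i. i \<in> F \<Longrightarrow> f i \<in> A"
  shows "sum f F \<in> A"
proof (cases "finite F")
  case True
  then show ?thesis using assms(2)
    by (induction F rule: finite_induct) (use assms(1) in \<open>auto simp: submodule_of_def\<close>)
qed (use assms(1) in \<open>simp add: submodule_of_def\<close>)

lemma submodule_of_set_plus:
  assumes X: "submodule_of S X" and Y: "submodule_of S Y"
  shows "submodule_of S (X + Y)"
  unfolding submodule_of_def
proof (intro conjI ballI)
  show "0 \<in> X + Y" using X Y set_plus_intro[of 0 X 0 Y] by (simp add: submodule_of_def)
next
  fix u v assume "u \<in> X + Y" "v \<in> X + Y"
  then obtain a b a' b' where "a \<in> X" "b \<in> Y" "a' \<in> X" "b' \<in> Y" "u = a + b" "v = a' + b'"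
    by (auto elim!: set_plus_elim)
  moreover from this have "(a + a') + (b + b') \<in> X + Y"
    using X Y by (intro set_plus_intro) (simp_all add: submodule_of_def)
  ultimately show "u + v \<in> X + Y" by (simp add: ac_simps)
next
  fix r u assume "r \<in> S" "u \<in> X + Y"
  then obtain a b where "a \<in> X" "b \<in> Y" "u = a + b" by (auto elim!: set_plus_elim)
  then show "r * u \<in> X + Y"
    using \<open>r \<in> S\<close> X Y by (auto simp: submodule_of_def distrib_left)
qed

lemma set_plus_zero_superset: "0 \<in> Y \<Longrightarrow> X \<subseteq> X + (Y :: 'a::comm_monoid_add set)"
  using set_zero_plus2[of Y X] by (simp add: add.commute)

lemma set_plus_if_diff: "x \<in> X \<Longrightarrow> y - x \<in> Y \<Longrightarrow> y \<in> X + (Y :: 'a::ab_group_add set)"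
  using set_plus_intro[of x X "y - x" Y] by simp

lemma set_plus_subset_submodule:
  "submodule_of S A \<Longrightarrow> X \<subseteq> A \<Longrightarrow> Y \<subseteq> A \<Longrightarrow> X + Y \<subseteq> A"
  by (auto simp: submodule_of_def elim!: set_plus_elim)

lemma is_ideal_zero: "is_ideal I \<Longrightarrow> 0 \<in> I"
  and is_ideal_add: "is_ideal I \<Longrightarrow> x \<in> I \<Longrightarrow> y \<in> I \<Longrightarrow> x + y \<in> I"
  and is_ideal_mult: "is_ideal I \<Longrightarrow> x \<in> I \<Longrightarrow> r * x \<in> I"
  by (simp_all add: is_ideal_def)

lemma is_ideal_mult_right: "is_ideal I \<Longrightarrow> x \<in> I \<Longrightarrow> x * r \<in> I"
  using is_ideal_mult[of I x r] by (simp add: mult.commute)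

lemma is_ideal_diff: "is_ideal I \<Longrightarrow> x \<in> I \<Longrightarrow> y \<in> I \<Longrightarrow> x - y \<in> I"
  using is_ideal_add[of I x "- 1 * y"] is_ideal_mult[of I y "- 1"] by simp

lemma is_ideal_sum: "is_ideal I \<Longrightarrow> (\<And>i. i \<in> F \<Longrightarrow> f i \<in> I) \<Longrightarrow> sum f F \<in> I"
  by (rule submodule_of_sum) (simp_all add: is_ideal_iff_submodule_of)

lemma is_ideal_UNIV_iff: "is_ideal I \<Longrightarrow> I = UNIV \<longleftrightarrow> 1 \<in> I"
  using is_ideal_mult[of I 1] by force

lemma is_ideal_set_plus: "is_ideal I \<Longrightarrow> is_ideal I' \<Longrightarrow> is_ideal (I + I')"
  by (simp add: is_ideal_iff_submodule_of submodule_of_set_plus)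

lemma set_plus_subset_ideal: "is_ideal I \<Longrightarrow> X \<subseteq> I \<Longrightarrow> Y \<subseteq> I \<Longrightarrow> X + Y \<subseteq> I"
  by (simp add: is_ideal_iff_submodule_of set_plus_subset_submodule)

lemma ideal_plus_self:
  assumes "is_ideal I"
  shows "I + I = I"
proof
  show "I + I \<subseteq> I" using assms by (auto elim!: set_plus_elim intro: is_ideal_add)
  show "I \<subseteq> I + I" using assms by (intro set_zero_plus2 is_ideal_zero)
qed

lemma is_ideal_mult_image:
  assumes "is_ideal I"
  shows "is_ideal ((\<lambda>a. a * c) ` I)"
  unfolding is_ideal_def
proof (intro conjI ballI allI impI)
  show "0 \<in> (\<lambda>a. a * c) ` I" using is_ideal_zero[OF assms] by force
next
  fix x y assume "x \<in> (\<lambda>a. a * c) ` I" "y \<in> (\<lambda>a. a * c) ` I"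
  then obtain a b where "a \<in> I" "b \<in> I" "x = a * c" "y = b * c" by blast
  then show "x + y \<in> (\<lambda>a. a * c) ` I"
    using is_ideal_add[OF assms] by (auto simp: distrib_right intro!: image_eqI[of _ _ "a + b"])
next
  fix r x assume "x \<in> (\<lambda>a. a * c) ` I"
  then obtain a where "a \<in> I" "x = a * c" by blast
  then show "r * x \<in> (\<lambda>a. a * c) ` I"
    using is_ideal_mult[OF assms] by (auto simp: mult.assoc intro!: image_eqI[of _ _ "r * a"])
qed

lemma is_ideal_principal: "is_ideal (range (\<lambda>a. a * c))"
  using is_ideal_mult_image[of UNIV c] by (simp add: is_ideal_def)

lemma is_ideal_Union_chain:
  assumes "\<C> \<noteq> {}" "\<And>L. L \<in> \<C> \<Longrightarrow> is_ideal L"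
    and chain: "\<And>X Y. X \<in> \<C> \<Longrightarrow> Y \<in> \<C> \<Longrightarrow> X \<subseteq> Y \<or> Y \<subseteq> X"
  shows "is_ideal (\<Union>\<C>)"
proof -
  have "x + y \<in> \<Union>\<C>" if xy: "x \<in> \<Union>\<C>" "y \<in> \<Union>\<C>" for x y
  proof -
    obtain X Y where XY: "X \<in> \<C>" "Y \<in> \<C>" "x \<in> X" "y \<in> Y" using xy by blast
    then consider "X \<subseteq> Y" | "Y \<subseteq> X" using chain by blast
    then show ?thesis using XY assms(2) is_ideal_add by cases blast+
  qed
  moreover have "r * x \<in> \<Union>\<C>" if "x \<in> \<Union>\<C>" for r x
    using that assms(2) is_ideal_mult by blast
  moreover have "0 \<in> \<Union>\<C>" using assms(1,2) is_ideal_zero by blast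
  ultimately show ?thesis unfolding is_ideal_def by blast
qed

lemma nakayama_mem:
  assumes U: "is_ideal U" and m_unit: "\<And>a. a \<in> m \<Longrightarrow> \<exists>b. (1 - a) * b = 1"
    and c: "c \<in> U + (\<lambda>a. a * c) ` m"
  shows "c \<in> U"
proof -
  obtain u a where u: "u \<in> U" and a: "a \<in> m" and c_eq: "c = u + a * c"
    using c by (auto elim!: set_plus_elim)
  obtain b where b: "(1 - a) * b = 1" using m_unit[OF a] by blast
  have "u = c - a * c" using c_eq by (metis add_diff_cancel_right')
  have "b * u = ((1 - a) * b) * c" unfolding \<open>u = c - a * c\<close> by (simp add: algebra_simps)
  then have "c = b * u" using b by simp
  then show ?thesis using is_ideal_mult[OF U u] by simp
qed

lemma sub_gen_submodule_of:
  assumes S: "0 \<in> S" "\<And>x y. x \<in> S \<Longrightarrow> y \<in> S \<Longrightarrow> x + y \<in> S"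
    "\<And>x y. x \<in> S \<Longrightarrow> y \<in> S \<Longrightarrow> x * y \<in> S"
  shows "submodule_of S (sub_gen S G)"
  unfolding submodule_of_def
proof (intro conjI ballI)
  show "0 \<in> sub_gen S G"
    unfolding sub_gen_def by (rule CollectI, rule exI[of _ "{}"]) auto
next
  fix x y assume "x \<in> sub_gen S G" "y \<in> sub_gen S G"
  then obtain G1 c1 G2 c2 where 1: "finite G1" "G1 \<subseteq> G" "\<forall>g\<in>G1. c1 g \<in> S" "x = (\<Sum>g\<in>G1. c1 g * g)"
    and 2: "finite G2" "G2 \<subseteq> G" "\<forall>g\<in>G2. c2 g \<in> S" "y = (\<Sum>g\<in>G2. c2 g * g)"
    unfolding sub_gen_def by blast
  define c where "c g = (if g \<in> G1 then c1 g else 0) + (if g \<in> G2 then c2 g else 0)" for g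
  have "(\<Sum>g\<in>G1 \<union> G2. (if g \<in> G1 then c1 g else 0) * g) = x"
    unfolding 1(4) by (rule sum.mono_neutral_cong_right) (use 1 2 in auto)
  moreover have "(\<Sum>g\<in>G1 \<union> G2. (if g \<in> G2 then c2 g else 0) * g) = y"
    unfolding 2(4) by (rule sum.mono_neutral_cong_right) (use 1 2 in auto)
  ultimately have "x + y = (\<Sum>g\<in>G1 \<union> G2. c g * g)"
    by (simp add: c_def distrib_right sum.distrib)
  moreover have "\<forall>g\<in>G1 \<union> G2. c g \<in> S" using 1 2 S unfolding c_def by auto
  ultimately show "x + y \<in> sub_gen S G" unfolding sub_gen_def using 1 2
    by (intro CollectI exI[of _ "G1 \<union> G2"] exI[of _ c]) auto
next
  fix r x assume "r \<in> S" "x \<in> sub_gen S G"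
  then obtain G1 c1 where 1: "finite G1" "G1 \<subseteq> G" "\<forall>g\<in>G1. c1 g \<in> S" "x = (\<Sum>g\<in>G1. c1 g * g)"
    unfolding sub_gen_def by blast
  have "r * x = (\<Sum>g\<in>G1. (r * c1 g) * g)" using 1 by (simp add: sum_distrib_left mult.assoc)
  then show "r * x \<in> sub_gen S G" unfolding sub_gen_def using 1 S \<open>r \<in> S\<close>
    by (intro CollectI exI[of _ G1] exI[of _ "\<lambda>g. r * c1 g"]) auto
qed

lemma is_ideal_sub_gen: "is_ideal (sub_gen UNIV G)"
  by (simp add: is_ideal_iff_submodule_of sub_gen_submodule_of)

lemma sub_gen_least:
  assumes "submodule_of S A" "G \<subseteq> A"
  shows "sub_gen S G \<subseteq> A"
proof
  fix x assume "x \<in> sub_gen S G"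
  then obtain G' c where "G' \<subseteq> G" "\<forall>g\<in>G'. c g \<in> S" "x = (\<Sum>g\<in>G'. c g * g)"
    unfolding sub_gen_def by blast
  then show "x \<in> A" using assms by (auto intro!: submodule_of_sum simp: submodule_of_def)
qed

lemma sub_gen_superset: "1 \<in> S \<Longrightarrow> G \<subseteq> sub_gen S G"
  unfolding sub_gen_def by (auto intro!: exI[of _ "{g}" for g] exI[of _ "\<lambda>_. 1"])

lemma sub_gen_mono: "G \<subseteq> G' \<Longrightarrow> sub_gen S G \<subseteq> sub_gen S G'"
  unfolding sub_gen_def by blast

lemma coset_of_member:
  assumes "is_ideal I" "a \<in> I"
  shows "a +o I = I"
proof
  show "a +o I \<subseteq> I" using assms by (auto simp: elt_set_plus_def intro: is_ideal_add)
  show "I \<subseteq> a +o I" using assms by (auto intro: set_minus_imp_plus is_ideal_diff)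
qed

lemma coset_eq_iff:
  assumes "is_ideal I"
  shows "a +o I = b +o I \<longleftrightarrow> a - b \<in> I"
proof
  assume "a +o I = b +o I"
  moreover have "a \<in> a +o I" using set_plus_intro2[of 0 I a] is_ideal_zero[OF assms] by simp
  ultimately show "a - b \<in> I" by (simp add: set_plus_imp_minus)
next
  assume "a - b \<in> I"
  then have "b +o ((a - b) +o I) = b +o I" by (simp add: coset_of_member[OF assms])
  then show "a +o I = b +o I" by (simp add: set_plus_rearrange2)
qed

lemma coset_self: "is_ideal I \<Longrightarrow> a \<in> a +o I"
  using set_plus_intro2[of 0 I a] is_ideal_zero by fastforce

lemma coset_eq_ideal_iff: "is_ideal I \<Longrightarrow> a +o I = I \<longleftrightarrow> a \<in> I"
  using coset_eq_iff[of I a 0] by simp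

lemma sum_set_plus_ideal_eq_coset:
  assumes I: "is_ideal I" and "finite F"
    and X: "\<And>s. s \<in> F \<Longrightarrow> x s \<in> X s \<and> X s \<subseteq> x s +o I"
  shows "sum X F + I = sum x F +o I"
  using \<open>finite F\<close> X
proof (induction F rule: finite_induct)
  case empty
  then show ?case by simp
next
  case (insert s F)
  have "sum X (insert s F) + I = X s + (sum X F + I)"
    using insert.hyps by (simp add: add.assoc)
  also have "\<dots> = X s + (sum x F +o I)"
    using insert.IH insert.prems by (metis insert_iff)
  also have "\<dots> = (x s + sum x F) +o I"
  proof
    have "X s + (sum x F +o I) \<subseteq> (x s +o I) + (sum x F +o I)"
      using insert.prems by (intro set_plus_mono2) simp_all
    also have "\<dots> = (x s + sum x F) +o (I + I)" by (rule set_plus_rearrange)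
    also have "I + I = I" using I by (rule ideal_plus_self)
    finally show "X s + (sum x F +o I) \<subseteq> (x s + sum x F) +o I" .
    have "(x s + sum x F) +o I = x s +o (sum x F +o I)" by (simp add: set_plus_rearrange2)
    also have "\<dots> \<subseteq> X s + (sum x F +o I)" using insert.prems by (intro set_plus_mono3) simp
    finally show "(x s + sum x F) +o I \<subseteq> X s + (sum x F +o I)" .
  qed
  finally show ?case using insert.hyps by simp
qed

lemma exists_minimal_subset:
  assumes "finite A" "P A"
  obtains B where "B \<subseteq> A" "P B" "\<And>C. C \<subset> B \<Longrightarrow> \<not> P C"
proof -
  have "finite {B. B \<subseteq> A \<and> P B}"
    using assms(1) by (rule finite_subset[rotated, OF finite_Pow_iff[THEN iffD2]]) auto
  moreover have "{B. B \<subseteq> A \<and> P B} \<noteq> {}" using assms(2) by blast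
  ultimately obtain B where B: "B \<in> {B. B \<subseteq> A \<and> P B}"
    and min: "\<not> (\<exists>C\<in>{B. B \<subseteq> A \<and> P B}. C < B)"
    by (elim bexE[OF ex_min_if_finite])
  from B have "B \<subseteq> A" "P B" by simp_all
  moreover have "\<not> P C" if "C \<subset> B" for C
    using min that \<open>B \<subseteq> A\<close> by blast
  ultimately show ?thesis by (rule that)
qed

section \<open>Local rings\<close>

lemma ideal_in_maximal_ideal:
  fixes K :: "'a::comm_ring_1 set"
  assumes K: "is_ideal K" "1 \<notin> K"
  obtains M where "maximal_ideal M" "K \<subseteq> M"
proof -
  define \<A> where "\<A> = {L::'a set. is_ideal L \<and> K \<subseteq> L \<and> 1 \<notin> L}"
  have "\<exists>M\<in>\<A>. \<forall>L\<in>\<A>. M \<subseteq> L \<longrightarrow> L = M"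
  proof (rule subset_Zorn_nonempty)
    show "\<A> \<noteq> {}" using K unfolding \<A>_def by blast
  next
    fix \<C> assume \<C>: "\<C> \<noteq> {}" "subset.chain \<A> \<C>"
    then have "is_ideal (\<Union>\<C>)"
      by (intro is_ideal_Union_chain) (auto simp: subset_chain_def \<A>_def)
    moreover have "K \<subseteq> \<Union>\<C>" "1 \<notin> \<Union>\<C>"
      using \<C> unfolding subset_chain_def \<A>_def by blast+
    ultimately show "\<Union>\<C> \<in> \<A>" unfolding \<A>_def by blast
  qed
  then obtain M where "M \<in> \<A>" and max: "\<And>L. L \<in> \<A> \<Longrightarrow> M \<subseteq> L \<Longrightarrow> L = M" by blast
  then have M: "is_ideal M" "K \<subseteq> M" "1 \<notin> M" by (simp_all add: \<A>_def)
  have "maximal_ideal M"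
    unfolding maximal_ideal_def
  proof (intro conjI allI impI)
    show "is_ideal M" "M \<noteq> UNIV" using M by auto
    fix L assume L: "is_ideal L" "M \<subseteq> L"
    show "L = M \<or> L = UNIV"
    proof (cases "1 \<in> L")
      case False
      then have "L \<in> \<A>" using L M unfolding \<A>_def by blast
      then show ?thesis using max L(2) by blast
    qed (use is_ideal_UNIV_iff[OF L(1)] in blast)
  qed
  then show ?thesis using M(2) by (rule that)
qed

lemma local_ring_maximal_ideal:
  assumes "local_ring TYPE('a::comm_ring_1)"
  obtains m :: "'a::comm_ring_1 set" where "is_ideal m" and "\<And>a. a \<in> m \<Longrightarrow> \<exists>b. (1 - a) * b = 1"
    and "\<And>K. is_ideal K \<Longrightarrow> K \<noteq> UNIV \<Longrightarrow> K \<subseteq> m"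
proof -
  obtain m :: "'a set" where m: "maximal_ideal m" and unique: "\<And>M. maximal_ideal M \<Longrightarrow> M = m"
    using assms unfolding local_ring_def by blast
  have ideal: "is_ideal m" and proper: "1 \<notin> m"
    using m is_ideal_UNIV_iff by (auto simp: maximal_ideal_def)
  have largest: "K \<subseteq> m" if "is_ideal K" "K \<noteq> UNIV" for K
    using ideal_in_maximal_ideal[of K] unique that is_ideal_UNIV_iff by metis
  have "\<exists>b. (1 - a) * b = 1" if a: "a \<in> m" for a
  proof (rule ccontr)
    assume "\<nexists>b. (1 - a) * b = 1"
    then have "range (\<lambda>r. r * (1 - a)) \<noteq> UNIV" by (metis UNIV_I imageE mult.commute)
    then have "range (\<lambda>r. r * (1 - a)) \<subseteq> m" by (rule largest[OF is_ideal_principal])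
    then have "1 - a \<in> m" by (metis mult_1 rangeI subsetD)
    then have "(1 - a) + a \<in> m" using is_ideal_add[OF ideal _ a] by blast
    then show False using proper by simp
  qed
  from ideal this largest show ?thesis by (rule that)
qed

section \<open>Graded pieces of the Rees algebra\<close>

definition graded_ideals :: "(nat \<Rightarrow> 'a::comm_ring_1 set) \<Rightarrow> (nat \<Rightarrow> 'a set) \<Rightarrow> bool" where
  "graded_ideals J Z \<longleftrightarrow>
     (\<forall>n. is_ideal (Z n)) \<and> (\<forall>k n a z. a \<in> J k \<longrightarrow> z \<in> Z n \<longrightarrow> a * z \<in> Z (k + n))"

definition poly_in :: "(nat \<Rightarrow> 'a::comm_ring_1 set) \<Rightarrow> 'a poly set" where
  "poly_in Z = {p. \<forall>n. coeff p n \<in> Z n}"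

abbreviation gr_kernel :: "(nat \<Rightarrow> 'a::comm_ring_1 set) \<Rightarrow> 'a poly set" where
  "gr_kernel J \<equiv> poly_in (\<lambda>n. J (Suc n))"

definition monom_part :: "'a::comm_ring_1 poly set \<Rightarrow> nat \<Rightarrow> 'a set" where
  "monom_part A n = {c. monom c n \<in> A}"

definition monomial_set :: "'a::comm_ring_1 poly set \<Rightarrow> bool" where
  "monomial_set G \<longleftrightarrow> (\<forall>g\<in>G. g = monom (lead_coeff g) (degree g))"

definition gen_part :: "(nat \<Rightarrow> 'a::comm_ring_1 set) \<Rightarrow> 'a poly set \<Rightarrow> nat \<Rightarrow> 'a set" where
  "gen_part J G n =
     sub_gen UNIV {a * lead_coeff g | a g. g \<in> G \<and> degree g \<le> n \<and> a \<in> J (n - degree g)}"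

text \<open>The degree n part of M N, in the notation of the introduction.\<close>
definition MN_part :: "(nat \<Rightarrow> 'a::comm_ring_1 set) \<Rightarrow> 'a set \<Rightarrow> 'a set \<Rightarrow> nat \<Rightarrow> 'a set" where
  "MN_part J I m n = sub_gen UNIV ({a * b | a b. a \<in> m \<and> b \<in> J n \<inter> I} \<union>
     {a * b | a b k. 1 \<le> k \<and> k \<le> n \<and> a \<in> J k \<and> b \<in> J (n - k) \<inter> I})"

text \<open>Z = 0 treats N itself, Z n = J (Suc n) its image in the associated graded ring.\<close>
definition excess_degrees ::
    "(nat \<Rightarrow> 'a::comm_ring_1 set) \<Rightarrow> 'a set \<Rightarrow> 'a set \<Rightarrow> (nat \<Rightarrow> 'a set) \<Rightarrow> nat set" where
  "excess_degrees J I m Z = {n. \<not> J n \<inter> I \<subseteq> MN_part J I m n + Z n}"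

definition gr_proj :: "(nat \<Rightarrow> 'a::comm_ring_1 set) \<Rightarrow> 'a poly \<Rightarrow> nat \<Rightarrow> 'a set" where
  "gr_proj J p = (\<lambda>n. coeff p n +o J (Suc n))"

lemma rees_eq_poly_in: "rees J = poly_in J"
  by (simp add: rees_def poly_in_def)

lemma rees_part_eq_poly_in: "rees_part J I = poly_in (\<lambda>n. J n \<inter> I)"
  by (auto simp: rees_part_def rees_def poly_in_def)

lemma poly_in_zero: "poly_in (\<lambda>_. {0}) = {0}"
  by (auto simp: poly_in_def poly_eq_iff)

lemma graded_ideals_inter: "graded_ideals J Z \<Longrightarrow> is_ideal I \<Longrightarrow> graded_ideals J (\<lambda>n. Z n \<inter> I)"
  unfolding graded_ideals_def is_ideal_def by auto

lemma graded_ideals_zero: "graded_ideals J (\<lambda>_. {0})"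
  by (simp add: graded_ideals_def is_ideal_def)

lemma poly_in_monom_iff: "graded_ideals J Z \<Longrightarrow> monom c n \<in> poly_in Z \<longleftrightarrow> c \<in> Z n"
  by (auto simp: poly_in_def graded_ideals_def is_ideal_zero)

lemma poly_in_mult:
  assumes Z: "graded_ideals J Z" and p: "p \<in> rees J" and q: "q \<in> poly_in Z"
  shows "p * q \<in> poly_in Z"
proof -
  have "coeff p i * coeff q (n - i) \<in> Z n" if "i \<le> n" for i n
    using Z p q that unfolding graded_ideals_def rees_def poly_in_def
    by (metis le_add_diff_inverse mem_Collect_eq)
  moreover have "is_ideal (Z n)" for n using Z by (simp add: graded_ideals_def)
  ultimately have "coeff (p * q) n \<in> Z n" for n
    unfolding coeff_mult by (intro is_ideal_sum) auto
  then show ?thesis by (simp add: poly_in_def)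
qed

lemma submodule_of_poly_in:
  assumes "graded_ideals J Z"
  shows "submodule_of (rees J) (poly_in Z)"
  unfolding submodule_of_def
proof (intro conjI ballI)
  show "0 \<in> poly_in Z" using assms by (simp add: poly_in_def graded_ideals_def is_ideal_zero)
  show "p + q \<in> poly_in Z" if "p \<in> poly_in Z" "q \<in> poly_in Z" for p q
    using assms that by (simp add: poly_in_def graded_ideals_def is_ideal_add)
  show "r * p \<in> poly_in Z" if "r \<in> rees J" "p \<in> poly_in Z" for r p
    using assms that by (rule poly_in_mult)
qed

lemma coeff_set_plus_poly_in:
  assumes "p \<in> X + poly_in Z" "\<And>q. q \<in> X \<Longrightarrow> coeff q n \<in> W"
  shows "coeff p n \<in> W + Z n"
  using assms by (auto simp: poly_in_def elim!: set_plus_elim intro!: set_plus_intro)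

lemma monomial_set_if_monoms:
  assumes "\<And>g. g \<in> G \<Longrightarrow> g \<noteq> 0 \<and> (\<exists>c n. g = monom c n)"
  shows "monomial_set G"
  unfolding monomial_set_def using assms by (metis degree_monom_eq lead_coeff_monom monom_eq_0_iff)

lemma is_ideal_gen_part: "is_ideal (gen_part J G n)"
  unfolding gen_part_def by (rule is_ideal_sub_gen)

lemma gen_part_generator:
  "g \<in> G \<Longrightarrow> degree g \<le> n \<Longrightarrow> a \<in> J (n - degree g) \<Longrightarrow> a * lead_coeff g \<in> gen_part J G n"
  unfolding gen_part_def by (rule subsetD[OF sub_gen_superset]) blast+

lemma gen_part_subset:
  assumes "is_ideal W"
    and "\<And>g a. g \<in> G \<Longrightarrow> degree g \<le> n \<Longrightarrow> a \<in> J (n - degree g) \<Longrightarrow> a * lead_coeff g \<in> W"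
  shows "gen_part J G n \<subseteq> W"
  unfolding gen_part_def
  using assms by (intro sub_gen_least) (auto simp: is_ideal_iff_submodule_of)

lemma gen_part_remove_low:
  assumes "n < degree g0"
  shows "gen_part J G n \<subseteq> gen_part J (G - {g0}) n"
proof (rule gen_part_subset[OF is_ideal_gen_part])
  fix g a assume "g \<in> G" "degree g \<le> n" "a \<in> J (n - degree g)"
  then show "a * lead_coeff g \<in> gen_part J (G - {g0}) n"
    using assms by (intro gen_part_generator) auto
qed

lemma gen_part_remove:
  "gen_part J G n \<subseteq> gen_part J (G - {g0}) n + range (\<lambda>r. r * lead_coeff g0)"
proof (rule gen_part_subset[OF is_ideal_set_plus[OF is_ideal_gen_part is_ideal_principal]])
  fix g a assume g: "g \<in> G" "degree g \<le> n" and a: "a \<in> J (n - degree g)"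
  show "a * lead_coeff g \<in> gen_part J (G - {g0}) n + range (\<lambda>r. r * lead_coeff g0)"
  proof (cases "g = g0")
    case True
    then have "a * lead_coeff g \<in> range (\<lambda>r. r * lead_coeff g0)" by simp
    then show ?thesis by (rule subsetD[OF set_zero_plus2[OF is_ideal_zero[OF is_ideal_gen_part]]])
  next
    case False
    then have "a * lead_coeff g \<in> gen_part J (G - {g0}) n"
      using g a by (intro gen_part_generator) auto
    moreover have "0 \<in> range (\<lambda>r. r * lead_coeff g0)" by (metis mult_zero_left rangeI)
    ultimately show ?thesis by (rule subsetD[OF set_plus_zero_superset, rotated])
  qed
qed

lemma coeff_sub_gen_in_gen_part:
  assumes G: "monomial_set G" and p: "p \<in> sub_gen (rees J) G"
  shows "coeff p n \<in> gen_part J G n"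
proof -
  obtain G' c where G': "G' \<subseteq> G" "\<forall>g\<in>G'. c g \<in> rees J" and p_eq: "p = (\<Sum>g\<in>G'. c g * g)"
    using p unfolding sub_gen_def by blast
  have "coeff (c g * g) n \<in> gen_part J G n" if "g \<in> G'" for g
  proof -
    have "c g * g = monom (lead_coeff g) (degree g) * c g"
      using G G' that unfolding monomial_set_def by (metis mult.commute subsetD)
    then have coeff_eq: "coeff (c g * g) n =
        (if n < degree g then 0 else lead_coeff g * coeff (c g) (n - degree g))"
      by (simp add: coeff_monom_mult)
    have "coeff (c g) (n - degree g) \<in> J (n - degree g)" using G' that by (simp add: rees_def)
    then have "n < degree g \<or> coeff (c g) (n - degree g) * lead_coeff g \<in> gen_part J G n"
      using G' that by (auto intro: gen_part_generator)
    then show ?thesis using coeff_eq is_ideal_zero[OF is_ideal_gen_part] by (auto simp: ac_simps)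
  qed
  then show ?thesis
    unfolding p_eq coeff_sum by (intro is_ideal_sum is_ideal_gen_part)
qed

lemma is_ideal_MN_part: "is_ideal (MN_part J I m n)"
  unfolding MN_part_def by (rule is_ideal_sub_gen)

lemma MN_part_subset:
  assumes "is_ideal W"
    and "\<And>a b. a \<in> m \<Longrightarrow> b \<in> J n \<inter> I \<Longrightarrow> a * b \<in> W"
    and "\<And>a b k. 1 \<le> k \<Longrightarrow> k \<le> n \<Longrightarrow> a \<in> J k \<Longrightarrow> b \<in> J (n - k) \<inter> I \<Longrightarrow> a * b \<in> W"
  shows "MN_part J I m n \<subseteq> W"
  unfolding MN_part_def
  using assms by (intro sub_gen_least) (auto simp: is_ideal_iff_submodule_of)

lemma MN_part_max: "a \<in> m \<Longrightarrow> b \<in> J n \<inter> I \<Longrightarrow> a * b \<in> MN_part J I m n"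
  unfolding MN_part_def by (rule subsetD[OF sub_gen_superset]) auto

lemma MN_part_positive:
  "1 \<le> k \<Longrightarrow> k \<le> n \<Longrightarrow> a \<in> J k \<Longrightarrow> b \<in> J (n - k) \<inter> I \<Longrightarrow> a * b \<in> MN_part J I m n"
  unfolding MN_part_def by (rule subsetD[OF sub_gen_superset]) blast+

section \<open>The Rees algebra and the associated graded ring\<close>

locale filtered_ring =
  fixes J :: "nat \<Rightarrow> 'a::comm_ring_1 set"
  assumes is_filtration: "filtration J"
begin

lemma filtration_ideal: "is_ideal (J n)"
  using is_filtration by (simp add: filtration_def)

lemma filtration_0: "J 0 = UNIV"
  using is_filtration by (simp add: filtration_def)

lemma filtration_antimono: "n \<le> m \<Longrightarrow> J m \<subseteq> J n"
  using is_filtration unfolding filtration_def by (metis order_le_less order_refl)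

lemma filtration_mult: "x \<in> J m \<Longrightarrow> y \<in> J n \<Longrightarrow> x * y \<in> J (m + n)"
  using is_filtration by (simp add: filtration_def)

lemma graded_ideals_filtration: "graded_ideals J J"
  by (simp add: graded_ideals_def filtration_ideal filtration_mult)

lemma graded_ideals_shift: "graded_ideals J (\<lambda>n. J (Suc n))"
  unfolding graded_ideals_def by (metis filtration_ideal filtration_mult add_Suc_right)

lemma rees_zero: "0 \<in> rees J"
  by (simp add: rees_def filtration_ideal is_ideal_zero)

lemma rees_one: "1 \<in> rees J"
  unfolding rees_def
proof (intro CollectI allI)
  fix n
  show "coeff 1 n \<in> J n" by (cases n) (simp_all add: filtration_0 filtration_ideal is_ideal_zero)
qed

lemma rees_add: "p \<in> rees J \<Longrightarrow> q \<in> rees J \<Longrightarrow> p + q \<in> rees J"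
  by (simp add: rees_def is_ideal_add filtration_ideal)

lemma rees_mult: "p \<in> rees J \<Longrightarrow> q \<in> rees J \<Longrightarrow> p * q \<in> rees J"
  using poly_in_mult[OF graded_ideals_filtration] by (simp add: rees_eq_poly_in)

lemma rees_monom: "monom c n \<in> rees J \<longleftrightarrow> c \<in> J n"
  using poly_in_monom_iff[OF graded_ideals_filtration] by (simp add: rees_eq_poly_in)

lemma submodule_of_rees_sub_gen: "submodule_of (rees J) (sub_gen (rees J) G)"
  by (rule sub_gen_submodule_of) (auto intro: rees_zero rees_add rees_mult)

lemma zero_in_rees_sub_gen: "0 \<in> sub_gen (rees J) G"
  using submodule_of_rees_sub_gen by (simp add: submodule_of_def)

lemma sub_gen_rees_superset: "G \<subseteq> sub_gen (rees J) G"
  by (rule sub_gen_superset[OF rees_one])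

lemma submodule_of_gr_kernel: "submodule_of (rees J) (gr_kernel J)"
  by (rule submodule_of_poly_in[OF graded_ideals_shift])

lemma zero_in_gr_kernel: "0 \<in> gr_kernel J"
  using submodule_of_gr_kernel by (simp add: submodule_of_def)

lemma mem_submodule_if_monoms:
  assumes A: "submodule_of (rees J) A" and monoms: "\<And>k. monom (coeff p k) k \<in> A"
  shows "p \<in> A"
proof -
  have "(\<Sum>k\<le>degree p. monom (coeff p k) k) \<in> A"
    using A monoms by (rule submodule_of_sum)
  then show ?thesis by (simp add: poly_as_sum_of_monoms)
qed

lemma is_ideal_monom_part:
  assumes A: "submodule_of (rees J) A"
  shows "is_ideal (monom_part A n)"
proof -
  have "monom 0 n \<in> A" using A by (simp add: submodule_of_def)
  moreover have "monom (x + y) n \<in> A" if "monom x n \<in> A" "monom y n \<in> A" for x y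
    using A that by (simp add: submodule_of_def add_monom[symmetric])
  moreover have "monom (r * x) n \<in> A" if "monom x n \<in> A" for r x
  proof -
    have "monom r 0 \<in> rees J" using rees_monom filtration_0 by simp
    then have "monom r 0 * monom x n \<in> A" using A that by (simp add: submodule_of_def)
    then show ?thesis by (simp add: mult_monom)
  qed
  ultimately show ?thesis by (simp add: is_ideal_def monom_part_def)
qed

lemma monom_part_mult:
  assumes A: "submodule_of (rees J) A" and a: "a \<in> J k" and b: "b \<in> monom_part A l"
  shows "a * b \<in> monom_part A (k + l)"
proof -
  have "monom a k * monom b l \<in> A"
    using A a b rees_monom by (simp add: submodule_of_def monom_part_def)
  then show ?thesis by (simp add: monom_part_def mult_monom)
qed

lemma gen_part_subset_monom_part:
  assumes A: "submodule_of (rees J) A" and G: "monomial_set G" "G \<subseteq> A"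
  shows "gen_part J G n \<subseteq> monom_part A n"
proof (rule gen_part_subset[OF is_ideal_monom_part[OF A]])
  fix g a assume g: "g \<in> G" "degree g \<le> n" and a: "a \<in> J (n - degree g)"
  have "g = monom (lead_coeff g) (degree g)" using G(1) g(1) unfolding monomial_set_def by blast
  then have "lead_coeff g \<in> monom_part A (degree g)"
    using G(2) g(1) unfolding monom_part_def by (metis mem_Collect_eq subsetD)
  then have "a * lead_coeff g \<in> monom_part A (n - degree g + degree g)"
    by (rule monom_part_mult[OF A a])
  then show "a * lead_coeff g \<in> monom_part A n" using g(2) by simp
qed

lemma gr_proj_in_gr:
  assumes "p \<in> rees J"
  shows "gr_proj J p \<in> gr J"
proof -
  have "gr_proj J p n = J (Suc n)" if "degree p < n" for n
    unfolding gr_proj_def coeff_eq_0[OF that] by (rule set_zero_plus)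
  then have "{n. gr_proj J p n \<noteq> J (Suc n)} \<subseteq> {..degree p}"
    using not_le by auto
  then have "finite {n. gr_proj J p n \<noteq> J (Suc n)}"
    by (rule finite_subset) simp
  then show ?thesis using assms by (auto simp: gr_def gr_proj_def rees_def)
qed

lemma gr_proj_eq_iff: "gr_proj J p = gr_proj J q \<longleftrightarrow> p - q \<in> gr_kernel J"
  by (simp add: gr_proj_def fun_eq_iff poly_in_def coset_eq_iff[OF filtration_ideal])

lemma gr_proj_eq_zero_iff: "gr_proj J p = gr_zero J \<longleftrightarrow> p \<in> gr_kernel J"
proof -
  have "gr_zero J = gr_proj J 0" by (simp add: gr_proj_def gr_zero_def)
  then show ?thesis by (simp add: gr_proj_eq_iff)
qed

lemma gr_proj_image_plus_kernel: "gr_proj J ` (X + gr_kernel J) = gr_proj J ` X"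
proof
  show "gr_proj J ` (X + gr_kernel J) \<subseteq> gr_proj J ` X"
  proof
    fix y assume "y \<in> gr_proj J ` (X + gr_kernel J)"
    then obtain x k where "x \<in> X" "k \<in> gr_kernel J" "y = gr_proj J (x + k)"
      by (auto elim!: set_plus_elim)
    then show "y \<in> gr_proj J ` X" by (auto simp: gr_proj_eq_iff intro!: image_eqI[of _ _ x])
  qed
  show "gr_proj J ` X \<subseteq> gr_proj J ` (X + gr_kernel J)"
    by (intro image_mono set_plus_zero_superset zero_in_gr_kernel)
qed

lemma gr_proj_image_subset_iff:
  "gr_proj J ` X \<subseteq> gr_proj J ` Y \<longleftrightarrow> X + gr_kernel J \<subseteq> Y + gr_kernel J"
proof
  assume XY: "gr_proj J ` X \<subseteq> gr_proj J ` Y"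
  show "X + gr_kernel J \<subseteq> Y + gr_kernel J"
  proof
    fix z assume "z \<in> X + gr_kernel J"
    then obtain x k where xk: "x \<in> X" "k \<in> gr_kernel J" "z = x + k" by (auto elim!: set_plus_elim)
    then obtain y where "y \<in> Y" "gr_proj J x = gr_proj J y" using XY by blast
    then have "x - y \<in> gr_kernel J" by (simp add: gr_proj_eq_iff)
    then have "(x - y) + k \<in> gr_kernel J"
      using submodule_of_gr_kernel xk(2) by (simp add: submodule_of_def)
    moreover have "z - y = (x - y) + k" using xk(3) by simp
    ultimately have "z - y \<in> gr_kernel J" by (simp only:)
    then show "z \<in> Y + gr_kernel J" using \<open>y \<in> Y\<close> by (rule set_plus_if_diff[rotated])
  qed
next
  assume "X + gr_kernel J \<subseteq> Y + gr_kernel J"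
  then show "gr_proj J ` X \<subseteq> gr_proj J ` Y"
    using image_mono gr_proj_image_plus_kernel by metis
qed

lemma gr_proj_image_eq_iff:
  "gr_proj J ` X = gr_proj J ` Y \<longleftrightarrow> X + gr_kernel J = Y + gr_kernel J"
  by (simp add: set_eq_subset gr_proj_image_subset_iff)

lemma gr_proj_surj:
  assumes "g \<in> gr J"
  obtains p where "p \<in> rees J" "gr_proj J p = g"
proof -
  have "\<forall>n. \<exists>y. y \<in> J n \<and> g n = y +o J (Suc n)" using assms by (auto simp: gr_def)
  then obtain x where x: "\<And>n. x n \<in> J n \<and> g n = x n +o J (Suc n)"
    using choice[of "\<lambda>n y. y \<in> J n \<and> g n = y +o J (Suc n)"] by blast
  define S where "S = {n. g n \<noteq> J (Suc n)}"
  have "finite S" using assms by (simp add: gr_def S_def)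
  define p where "p = (\<Sum>n\<in>S. monom (x n) n)"
  have coeff_p: "coeff p n = (if n \<in> S then x n else 0)" for n
    using \<open>finite S\<close> by (simp add: p_def coeff_sum)
  have "p \<in> rees J"
    using x filtration_ideal by (auto simp: rees_def coeff_p is_ideal_zero)
  moreover have "gr_proj J p = g"
    using x by (auto simp: gr_proj_def coeff_p S_def fun_eq_iff)
  ultimately show ?thesis by (rule that)
qed

lemma coset_mult_subset:
  assumes a: "a \<in> J i" and b: "b \<in> J j"
  shows "(a +o J (Suc i)) * (b +o J (Suc j)) \<subseteq> (a * b) +o J (Suc (i + j))"
proof
  fix z assume "z \<in> (a +o J (Suc i)) * (b +o J (Suc j))"
  then obtain u v where uv: "u \<in> J (Suc i)" "v \<in> J (Suc j)" "z = (a + u) * (b + v)"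
    by (auto elim!: set_times_elim simp: elt_set_plus_def)
  have "a * v \<in> J (Suc (i + j))" "u * b \<in> J (Suc (i + j))"
    using filtration_mult[OF a uv(2)] filtration_mult[OF uv(1) b] by simp_all
  moreover have "u * v \<in> J (Suc (i + j))"
    using filtration_mult[OF uv(1,2)] filtration_antimono[of "Suc (i + j)" "Suc i + Suc j"] by auto
  ultimately have "a * v + u * b + u * v \<in> J (Suc (i + j))"
    by (intro is_ideal_add filtration_ideal)
  moreover have "z = a * b + (a * v + u * b + u * v)" using uv(3) by (simp add: algebra_simps)
  ultimately show "z \<in> (a * b) +o J (Suc (i + j))" by (simp add: elt_set_plus_def)
qed

lemma gr_mul_gr_proj:
  assumes p: "p \<in> rees J" and q: "q \<in> rees J"
  shows "gr_mul J (gr_proj J p) (gr_proj J q) = gr_proj J (p * q)"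
proof
  fix n
  have "(\<Sum>i\<le>n. gr_proj J p i * gr_proj J q (n - i)) + J (Suc n)
      = (\<Sum>i\<le>n. coeff p i * coeff q (n - i)) +o J (Suc n)"
  proof (rule sum_set_plus_ideal_eq_coset[OF filtration_ideal])
    fix i assume "i \<in> {..n}"
    moreover have "coeff p i \<in> J i" "coeff q (n - i) \<in> J (n - i)"
      using p q by (simp_all add: rees_def)
    ultimately show "coeff p i * coeff q (n - i) \<in> gr_proj J p i * gr_proj J q (n - i) \<and>
        gr_proj J p i * gr_proj J q (n - i) \<subseteq> (coeff p i * coeff q (n - i)) +o J (Suc n)"
      using coset_mult_subset[of "coeff p i" i "coeff q (n - i)" "n - i"]
      by (auto simp: gr_proj_def coset_self filtration_ideal)
  qed simp
  then show "gr_mul J (gr_proj J p) (gr_proj J q) n = gr_proj J (p * q) n"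
    by (simp add: gr_mul_def gr_proj_def coeff_mult)
qed

lemma gr_proj_sum_mult:
  assumes "finite T" and rees: "\<And>t. t \<in> T \<Longrightarrow> p t \<in> rees J \<and> q t \<in> rees J"
  shows "gr_proj J (\<Sum>t\<in>T. p t * q t)
    = (\<lambda>n. (\<Sum>t\<in>T. gr_mul J (gr_proj J (p t)) (gr_proj J (q t)) n) + J (Suc n))"
proof
  fix n
  have "gr_mul J (gr_proj J (p t)) (gr_proj J (q t)) n = coeff (p t * q t) n +o J (Suc n)"
    if "t \<in> T" for t
    using rees[OF that] by (subst gr_mul_gr_proj) (auto simp: gr_proj_def)
  then have "(\<Sum>t\<in>T. gr_mul J (gr_proj J (p t)) (gr_proj J (q t)) n) + J (Suc n)
      = (\<Sum>t\<in>T. coeff (p t * q t) n) +o J (Suc n)"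
    by (intro sum_set_plus_ideal_eq_coset[OF filtration_ideal \<open>finite T\<close>])
      (simp add: coset_self filtration_ideal)
  then show "gr_proj J (\<Sum>t\<in>T. p t * q t) n
      = (\<Sum>t\<in>T. gr_mul J (gr_proj J (p t)) (gr_proj J (q t)) n) + J (Suc n)"
    by (simp add: gr_proj_def coeff_sum)
qed

lemma gr_gen_subset_gr_proj_sub_gen:
  assumes lift: "\<And>t. t \<in> T \<Longrightarrow> \<rho> t \<in> rees J \<and> gr_proj J (\<rho> t) = t"
  shows "gr_gen J T \<subseteq> gr_proj J ` sub_gen (rees J) (\<rho> ` T)"
proof
  fix x assume "x \<in> gr_gen J T"
  then obtain T' c where T': "finite T'" "T' \<subseteq> T" "\<forall>t\<in>T'. c t \<in> gr J"
    and x: "x = (\<lambda>n. (\<Sum>t\<in>T'. gr_mul J (c t) t n) + J (Suc n))"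
    unfolding gr_gen_def by blast
  have "\<forall>t\<in>T'. \<exists>p. p \<in> rees J \<and> gr_proj J p = c t"
    using T'(3) gr_proj_surj by metis
  then obtain q where q: "\<And>t. t \<in> T' \<Longrightarrow> q t \<in> rees J \<and> gr_proj J (q t) = c t"
    by metis
  have "gr_proj J (\<Sum>t\<in>T'. q t * \<rho> t)
      = (\<lambda>n. (\<Sum>t\<in>T'. gr_mul J (gr_proj J (q t)) (gr_proj J (\<rho> t)) n) + J (Suc n))"
    by (rule gr_proj_sum_mult) (use T' q lift in auto)
  also have "\<dots> = x"
    using q lift T'(2) by (auto simp: x subset_iff intro!: sum.cong)
  finally have x_eq: "x = gr_proj J (\<Sum>t\<in>T'. q t * \<rho> t)" ..
  have inj: "inj_on \<rho> T'" by (rule inj_on_inverseI[of _ "gr_proj J"]) (use lift T'(2) in auto)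
  have "(\<Sum>t\<in>T'. q t * \<rho> t) = (\<Sum>g\<in>\<rho> ` T'. q (the_inv_into T' \<rho> g) * g)"
    using inj by (simp add: sum.reindex the_inv_into_f_f)
  moreover have "\<forall>g\<in>\<rho> ` T'. q (the_inv_into T' \<rho> g) \<in> rees J"
    using inj q by (auto simp: the_inv_into_f_f)
  ultimately have "(\<Sum>t\<in>T'. q t * \<rho> t) \<in> sub_gen (rees J) (\<rho> ` T)"
    unfolding sub_gen_def using T'(1,2)
    by (intro CollectI exI[of _ "\<rho> ` T'"] exI[of _ "\<lambda>g. q (the_inv_into T' \<rho> g)"]) auto
  then show "x \<in> gr_proj J ` sub_gen (rees J) (\<rho> ` T)" using x_eq by blast
qed

lemma gr_proj_sub_gen_subset_gr_gen:
  assumes lift: "\<And>t. t \<in> T \<Longrightarrow> \<rho> t \<in> rees J \<and> gr_proj J (\<rho> t) = t"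
  shows "gr_proj J ` sub_gen (rees J) (\<rho> ` T) \<subseteq> gr_gen J T"
proof
  fix x assume "x \<in> gr_proj J ` sub_gen (rees J) (\<rho> ` T)"
  then obtain G' c where G': "finite G'" "G' \<subseteq> \<rho> ` T" "\<forall>g\<in>G'. c g \<in> rees J"
    and x: "x = gr_proj J (\<Sum>g\<in>G'. c g * g)"
    unfolding sub_gen_def by blast
  obtain T' where T': "T' \<subseteq> T" "G' = \<rho> ` T'" using G'(2) by (auto simp: subset_image_iff)
  have inj: "inj_on \<rho> T'" by (rule inj_on_inverseI[of _ "gr_proj J"]) (use lift T'(1) in auto)
  then have "finite T'" using G'(1) T'(2) by (simp add: finite_image_iff)
  have "x = gr_proj J (\<Sum>t\<in>T'. c (\<rho> t) * \<rho> t)"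
    using inj by (simp add: x T'(2) sum.reindex)
  also have "\<dots> = (\<lambda>n. (\<Sum>t\<in>T'. gr_mul J (gr_proj J (c (\<rho> t))) (gr_proj J (\<rho> t)) n) + J (Suc n))"
    by (rule gr_proj_sum_mult) (use \<open>finite T'\<close> G' T' lift in auto)
  also have "\<dots> = (\<lambda>n. (\<Sum>t\<in>T'. gr_mul J (gr_proj J (c (\<rho> t))) t n) + J (Suc n))"
    using lift T'(1) by (simp add: subset_iff cong: sum.cong)
  finally show "x \<in> gr_gen J T"
    unfolding gr_gen_def using \<open>finite T'\<close> T' G'(3)
    by (intro CollectI exI[of _ T'] exI[of _ "\<lambda>t. gr_proj J (c (\<rho> t))"])
      (auto intro: gr_proj_in_gr)
qed

lemma gr_gen_eq_gr_proj_sub_gen: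
  "(\<And>t. t \<in> T \<Longrightarrow> \<rho> t \<in> rees J \<and> gr_proj J (\<rho> t) = t) \<Longrightarrow>
    gr_gen J T = gr_proj J ` sub_gen (rees J) (\<rho> ` T)"
  by (intro subset_antisym gr_gen_subset_gr_proj_sub_gen gr_proj_sub_gen_subset_gr_gen)

lemma sub_gen_plus_gr_kernel_subset:
  assumes "G \<subseteq> sub_gen (rees J) G' + gr_kernel J"
  shows "sub_gen (rees J) G + gr_kernel J \<subseteq> sub_gen (rees J) G' + gr_kernel J"
proof -
  have sub: "submodule_of (rees J) (sub_gen (rees J) G' + gr_kernel J)"
    by (intro submodule_of_set_plus submodule_of_rees_sub_gen submodule_of_gr_kernel)
  have "gr_kernel J \<subseteq> sub_gen (rees J) G' + gr_kernel J"
    by (intro set_zero_plus2 zero_in_rees_sub_gen)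
  with assms show ?thesis
    by (intro set_plus_subset_submodule[OF sub] sub_gen_least[OF sub])
qed

lemma gr_gen_gr_proj_image:
  assumes "G \<subseteq> rees J"
  shows "gr_gen J (gr_proj J ` G) = gr_proj J ` sub_gen (rees J) G"
proof -
  define \<rho> where "\<rho> t = (SOME g. g \<in> G \<and> gr_proj J g = t)" for t
  have lift: "\<rho> t \<in> G \<and> gr_proj J (\<rho> t) = t" if "t \<in> gr_proj J ` G" for t
    using that someI[of "\<lambda>g. g \<in> G \<and> gr_proj J g = t"] unfolding \<rho>_def by blast
  have "gr_gen J (gr_proj J ` G) = gr_proj J ` sub_gen (rees J) (\<rho> ` gr_proj J ` G)"
    using lift assms by (intro gr_gen_eq_gr_proj_sub_gen) blast
  also have "\<dots> = gr_proj J ` sub_gen (rees J) G"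
    unfolding gr_proj_image_eq_iff
  proof (intro subset_antisym sub_gen_plus_gr_kernel_subset)
    have "\<rho> ` gr_proj J ` G \<subseteq> G" using lift by blast
    also have "\<dots> \<subseteq> sub_gen (rees J) G" by (rule sub_gen_rees_superset)
    also have "\<dots> \<subseteq> sub_gen (rees J) G + gr_kernel J"
      by (intro set_plus_zero_superset zero_in_gr_kernel)
    finally show "\<rho> ` gr_proj J ` G \<subseteq> sub_gen (rees J) G + gr_kernel J" .
    show "G \<subseteq> sub_gen (rees J) (\<rho> ` gr_proj J ` G) + gr_kernel J"
    proof
      fix g assume "g \<in> G"
      then have "\<rho> (gr_proj J g) \<in> \<rho> ` gr_proj J ` G" by (intro imageI)
      then have "\<rho> (gr_proj J g) \<in> sub_gen (rees J) (\<rho> ` gr_proj J ` G)"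
        using sub_gen_rees_superset by (rule subsetD[rotated])
      moreover have "g - \<rho> (gr_proj J g) \<in> gr_kernel J"
        using lift[of "gr_proj J g"] \<open>g \<in> G\<close> gr_proj_eq_iff[of g "\<rho> (gr_proj J g)"] by auto
      ultimately show "g \<in> sub_gen (rees J) (\<rho> ` gr_proj J ` G) + gr_kernel J"
        by (rule set_plus_if_diff)
    qed
  qed
  finally show ?thesis .
qed

lemma gr_gen_remove_if_lift_redundant:
  assumes lift: "\<And>h. h \<in> H \<Longrightarrow> \<rho> h \<in> rees J \<and> gr_proj J (\<rho> h) = h"
    and h0: "h0 \<in> H" and redundant: "\<rho> h0 \<in> sub_gen (rees J) (\<rho> ` H - {\<rho> h0}) + gr_kernel J"
  shows "gr_gen J (H - {h0}) = gr_gen J H"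
proof -
  have inj: "inj_on \<rho> H" by (rule inj_on_inverseI[of _ "gr_proj J"]) (use lift in blast)
  have gr_gen_eq: "gr_gen J H' = gr_proj J ` sub_gen (rees J) (\<rho> ` H')" if "H' \<subseteq> H" for H'
    using that lift by (intro gr_gen_eq_gr_proj_sub_gen) blast
  have minus: "\<rho> ` H - {\<rho> h0} = \<rho> ` (H - {h0})"
    using h0 inj_on_image_set_diff[OF inj, of H "{h0}"] by simp
  have "\<rho> ` H \<subseteq> sub_gen (rees J) (\<rho> ` (H - {h0})) + gr_kernel J"
  proof
    fix g assume "g \<in> \<rho> ` H"
    show "g \<in> sub_gen (rees J) (\<rho> ` (H - {h0})) + gr_kernel J"
    proof (cases "g = \<rho> h0")
      case False
      with \<open>g \<in> \<rho> ` H\<close> have "g \<in> \<rho> ` (H - {h0})" by blast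
      then have "g \<in> sub_gen (rees J) (\<rho> ` (H - {h0}))" by (rule subsetD[OF sub_gen_rees_superset])
      then show ?thesis by (rule subsetD[OF set_plus_zero_superset[OF zero_in_gr_kernel]])
    qed (use redundant minus in simp)
  qed
  then have "sub_gen (rees J) (\<rho> ` H) + gr_kernel J
      \<subseteq> sub_gen (rees J) (\<rho> ` (H - {h0})) + gr_kernel J"
    by (rule sub_gen_plus_gr_kernel_subset)
  then have "gr_gen J H \<subseteq> gr_gen J (H - {h0})"
    using gr_gen_eq[of H] gr_gen_eq[of "H - {h0}"] by (simp add: gr_proj_image_subset_iff)
  moreover have "gr_gen J (H - {h0}) \<subseteq> gr_gen J H"
    using gr_gen_eq[of H] gr_gen_eq[of "H - {h0}"] by (auto intro!: image_mono sub_gen_mono)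
  ultimately show ?thesis by blast
qed

lemma gr_proj_sub_gen_diff_gr_kernel:
  "gr_proj J ` sub_gen (rees J) (G - gr_kernel J) = gr_proj J ` sub_gen (rees J) G"
  unfolding gr_proj_image_eq_iff
proof (rule subset_antisym)
  show "sub_gen (rees J) (G - gr_kernel J) + gr_kernel J \<subseteq> sub_gen (rees J) G + gr_kernel J"
    by (intro set_plus_mono2 sub_gen_mono) auto
  have "G \<subseteq> sub_gen (rees J) (G - gr_kernel J) + gr_kernel J"
  proof
    fix g assume "g \<in> G"
    show "g \<in> sub_gen (rees J) (G - gr_kernel J) + gr_kernel J"
    proof (cases "g \<in> gr_kernel J")
      case True
      then show ?thesis using set_zero_plus2[OF zero_in_rees_sub_gen] by blast
    next
      case False
      then have "g \<in> sub_gen (rees J) (G - gr_kernel J)"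
        using \<open>g \<in> G\<close> sub_gen_rees_superset by blast
      then show ?thesis using set_plus_zero_superset[OF zero_in_gr_kernel] by blast
    qed
  qed
  then show "sub_gen (rees J) G + gr_kernel J \<subseteq> sub_gen (rees J) (G - gr_kernel J) + gr_kernel J"
    by (rule sub_gen_plus_gr_kernel_subset)
qed

lemma gr_proj_monom_homog:
  assumes "c \<in> J n"
  shows "gr_homog J (gr_proj J (monom c n)) n"
proof -
  have "gr_proj J (monom c n) \<in> gr J" using assms by (simp add: gr_proj_in_gr rees_monom)
  then show ?thesis unfolding gr_homog_def by (simp add: gr_proj_def)
qed

lemma gr_homog_lift:
  assumes h: "gr_homog J h d" "h \<noteq> gr_zero J"
  obtains c where "c \<in> J d" "c \<noteq> 0" "gr_proj J (monom c d) = h" "gr_deg J h = d"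
proof -
  from h(1) obtain c where c: "c \<in> J d" "h d = c +o J (Suc d)"
    and other: "\<And>k. k \<noteq> d \<Longrightarrow> h k = J (Suc k)"
    unfolding gr_homog_def gr_def by blast
  have hd: "h d \<noteq> J (Suc d)"
  proof
    assume "h d = J (Suc d)"
    then have "h k = J (Suc k)" for k using other by (cases "k = d") auto
    then have "h = gr_zero J" by (simp add: gr_zero_def fun_eq_iff)
    then show False using h(2) by blast
  qed
  then have "c \<notin> J (Suc d)" using c(2) coset_eq_ideal_iff[OF filtration_ideal] by simp
  then have "c \<noteq> 0" using is_ideal_zero[OF filtration_ideal] by blast
  moreover have "gr_proj J (monom c d) = h"
    using c other by (auto simp: gr_proj_def fun_eq_iff)
  moreover have "gr_deg J h = d"
    unfolding gr_deg_def by (rule Least_equality) (use hd other in auto)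
  ultimately show ?thesis using c(1) by (rule that[rotated])
qed

lemma homogeneous_monomial_lift:
  assumes "\<And>h. h \<in> H \<Longrightarrow> h \<noteq> gr_zero J \<and> (\<exists>d. gr_homog J h d)"
  obtains \<rho> where "\<And>h. h \<in> H \<Longrightarrow> \<rho> h \<in> rees J \<and> gr_proj J (\<rho> h) = h \<and> degree (\<rho> h) = gr_deg J h"
    and "monomial_set (\<rho> ` H)"
proof -
  have "\<forall>h\<in>H. \<exists>c. c \<in> J (gr_deg J h) \<and> c \<noteq> 0 \<and> gr_proj J (monom c (gr_deg J h)) = h"
  proof
    fix h assume "h \<in> H"
    then obtain d where "gr_homog J h d" "h \<noteq> gr_zero J" using assms by blast
    then obtain c where "c \<in> J d" "c \<noteq> 0" "gr_proj J (monom c d) = h" "gr_deg J h = d"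
      by (rule gr_homog_lift)
    then show "\<exists>c. c \<in> J (gr_deg J h) \<and> c \<noteq> 0 \<and> gr_proj J (monom c (gr_deg J h)) = h"
      by auto
  qed
  then obtain c where c: "\<And>h. h \<in> H \<Longrightarrow>
      c h \<in> J (gr_deg J h) \<and> c h \<noteq> 0 \<and> gr_proj J (monom (c h) (gr_deg J h)) = h"
    by metis
  show ?thesis
  proof (rule that[of "\<lambda>h. monom (c h) (gr_deg J h)"])
    show "monom (c h) (gr_deg J h) \<in> rees J \<and> gr_proj J (monom (c h) (gr_deg J h)) = h \<and>
        degree (monom (c h) (gr_deg J h)) = gr_deg J h" if "h \<in> H" for h
      using c[OF that] by (simp add: rees_monom degree_monom_eq)
    show "monomial_set ((\<lambda>h. monom (c h) (gr_deg J h)) ` H)"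
      using c by (intro monomial_set_if_monoms) auto
  qed
qed

lemma gr_proj_monom_eq_initial:
  assumes "c \<in> J k" "c \<notin> J (Suc k)"
  shows "gr_proj J (monom c k) = initial J c"
proof -
  have "(LEAST n. c \<notin> J (Suc n)) = k"
  proof (rule Least_equality)
    show "c \<notin> J (Suc k)" by (rule assms(2))
    fix n assume "c \<notin> J (Suc n)"
    then show "k \<le> n"
      by (rule contrapos_np) (use assms(1) filtration_antimono[of "Suc n" k] in auto)
  qed
  moreover have "\<not> (\<forall>n. c \<in> J n)" using assms(2) by blast
  ultimately show ?thesis by (auto simp: initial_def gr_proj_def fun_eq_iff)
qed

text \<open>This includes the convention \<open>initial J f = gr_zero J\<close> for \<open>f\<close> in every \<open>J n\<close>,
  with \<open>k = 0\<close>.\<close>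
lemma initial_eq_gr_proj_monom: "\<exists>k. f \<in> J k \<and> initial J f = gr_proj J (monom f k)"
proof (cases "\<forall>n. f \<in> J n")
  case True
  then have "monom f 0 \<in> gr_kernel J"
    by (simp add: poly_in_monom_iff[OF graded_ideals_shift])
  then have "gr_proj J (monom f 0) = initial J f"
    using True by (simp add: initial_def gr_proj_eq_zero_iff)
  then show ?thesis using True by metis
next
  case False
  then obtain n where "f \<notin> J n" by blast
  then have "f \<notin> J (Suc (n - 1))" using filtration_0 by (cases n) auto
  then have notin: "f \<notin> J (Suc (LEAST n. f \<notin> J (Suc n)))" by (rule LeastI)
  have "f \<in> J (LEAST n. f \<notin> J (Suc n))"
  proof (cases "LEAST n. f \<notin> J (Suc n)")
    case (Suc k)
    then have "k < (LEAST n. f \<notin> J (Suc n))" by simp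
    then show ?thesis using not_less_Least Suc by fastforce
  qed (simp add: filtration_0)
  with notin show ?thesis using gr_proj_monom_eq_initial by metis
qed

lemma rees_part_subset_plus_gr_kernel:
  assumes I: "is_ideal I" and X: "submodule_of (rees J) X"
    and monoms: "\<And>c k. c \<in> J k \<inter> I \<Longrightarrow> c \<notin> J (Suc k) \<Longrightarrow> monom c k \<in> X + gr_kernel J"
  shows "rees_part J I \<subseteq> X + gr_kernel J"
proof
  have XK: "submodule_of (rees J) (X + gr_kernel J)"
    by (rule submodule_of_set_plus[OF X submodule_of_gr_kernel])
  fix p assume p: "p \<in> rees_part J I"
  show "p \<in> X + gr_kernel J"
  proof (rule mem_submodule_if_monoms[OF XK])
    fix k
    have c: "coeff p k \<in> J k \<inter> I" using p by (simp add: rees_part_def rees_def)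
    show "monom (coeff p k) k \<in> X + gr_kernel J"
    proof (cases "coeff p k \<in> J (Suc k)")
      case True
      then have "monom (coeff p k) k \<in> gr_kernel J"
        by (simp add: poly_in_monom_iff[OF graded_ideals_shift])
      moreover have "0 \<in> X" using X by (simp add: submodule_of_def)
      ultimately show ?thesis using set_zero_plus2 by blast
    qed (use c monoms in blast)
  qed
qed

lemma in_F_eq_gr_proj_image:
  assumes I: "is_ideal I"
  shows "in_F J I = gr_proj J ` rees_part J I"
proof -
  define \<iota> where "\<iota> f = (SOME k. f \<in> J k \<and> initial J f = gr_proj J (monom f k))" for f
  have \<iota>: "f \<in> J (\<iota> f) \<and> initial J f = gr_proj J (monom f (\<iota> f))" for f
    unfolding \<iota>_def by (rule someI_ex[OF initial_eq_gr_proj_monom])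
  define M where "M = (\<lambda>f. monom f (\<iota> f)) ` I"
  have N: "graded_ideals J (\<lambda>n. J n \<inter> I)"
    by (rule graded_ideals_inter[OF graded_ideals_filtration I])
  have N_sub: "submodule_of (rees J) (rees_part J I)"
    unfolding rees_part_eq_poly_in by (rule submodule_of_poly_in[OF N])
  have M_sub: "M \<subseteq> rees_part J I"
    using \<iota> by (auto simp: M_def rees_part_eq_poly_in poly_in_monom_iff[OF N])
  have "in_F J I = gr_gen J (gr_proj J ` M)"
    unfolding in_F_def M_def image_image using \<iota> by simp
  also have "\<dots> = gr_proj J ` sub_gen (rees J) M"
    using M_sub by (intro gr_gen_gr_proj_image) (auto simp: rees_part_def)
  also have "\<dots> = gr_proj J ` rees_part J I"
    unfolding gr_proj_image_eq_iff
  proof (rule subset_antisym)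
    show "sub_gen (rees J) M + gr_kernel J \<subseteq> rees_part J I + gr_kernel J"
      using sub_gen_least[OF N_sub M_sub] by (rule set_plus_mono2) simp
    have S: "submodule_of (rees J) (sub_gen (rees J) M + gr_kernel J)"
      by (intro submodule_of_set_plus submodule_of_rees_sub_gen submodule_of_gr_kernel)
    have "rees_part J I \<subseteq> sub_gen (rees J) M + gr_kernel J"
    proof (rule rees_part_subset_plus_gr_kernel[OF I submodule_of_rees_sub_gen])
      fix c k assume c: "c \<in> J k \<inter> I" "c \<notin> J (Suc k)"
      then have "gr_proj J (monom c k) = gr_proj J (monom c (\<iota> c))"
        using \<iota> gr_proj_monom_eq_initial by simp
      then have "monom c k - monom c (\<iota> c) \<in> gr_kernel J" by (simp add: gr_proj_eq_iff)
      moreover have "monom c (\<iota> c) \<in> sub_gen (rees J) M"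
        using c sub_gen_rees_superset by (force simp: M_def)
      ultimately show "monom c k \<in> sub_gen (rees J) M + gr_kernel J" by (intro set_plus_if_diff)
    qed
    moreover have "gr_kernel J \<subseteq> sub_gen (rees J) M + gr_kernel J"
      by (intro set_zero_plus2 zero_in_rees_sub_gen)
    ultimately show "rees_part J I + gr_kernel J \<subseteq> sub_gen (rees J) M + gr_kernel J"
      by (rule set_plus_subset_submodule[OF S])
  qed
  finally show ?thesis .
qed

section \<open>Graded Nakayama for monomial generating sets\<close>

lemma MN_part_subset_monom_part:
  assumes A: "submodule_of (rees J) A" and m: "is_ideal m"
    and below: "\<And>k. k < n \<Longrightarrow> J k \<inter> I \<subseteq> monom_part A k"
    and top: "J n \<inter> I \<subseteq> monom_part A n + range (\<lambda>r. r * c)"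
  shows "MN_part J I m n \<subseteq> monom_part A n + (\<lambda>a. a * c) ` m"
proof (rule MN_part_subset)
  show "is_ideal (monom_part A n + (\<lambda>a. a * c) ` m)"
    by (intro is_ideal_set_plus is_ideal_monom_part[OF A] is_ideal_mult_image m)
next
  fix a b assume a: "a \<in> m" and "b \<in> J n \<inter> I"
  then obtain u r where u: "u \<in> monom_part A n" and b_eq: "b = u + r * c"
    using top by (auto elim!: set_plus_elim)
  have "a * u + (a * r) * c \<in> monom_part A n + (\<lambda>a. a * c) ` m"
    using is_ideal_mult[OF is_ideal_monom_part[OF A] u] is_ideal_mult_right[OF m a]
    by (intro set_plus_intro imageI)
  then show "a * b \<in> monom_part A n + (\<lambda>a. a * c) ` m" by (simp add: b_eq algebra_simps)
next
  fix a b k assume k: "1 \<le> k" "k \<le> n" and a: "a \<in> J k" and b: "b \<in> J (n - k) \<inter> I"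
  have "b \<in> monom_part A (n - k)" using below[of "n - k"] b k by auto
  then have "a * b \<in> monom_part A (k + (n - k))" by (rule monom_part_mult[OF A a])
  then have "a * b \<in> monom_part A n" using k by simp
  moreover have "0 \<in> (\<lambda>a. a * c) ` m" using is_ideal_zero[OF m] by force
  ultimately show "a * b \<in> monom_part A n + (\<lambda>a. a * c) ` m"
    by (rule subsetD[OF set_plus_zero_superset, rotated])
qed

lemma inter_subset_monom_part_without_generator:
  assumes A: "submodule_of (rees J) A" and G: "monomial_set G" "G - {g0} \<subseteq> A"
    and Z_A: "\<And>k. Z k \<subseteq> monom_part A k"
    and cover: "\<And>n. J n \<inter> I \<subseteq> gen_part J G n + Z n"
  shows "k < degree g0 \<Longrightarrow> J k \<inter> I \<subseteq> monom_part A k"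
    and "J (degree g0) \<inter> I \<subseteq> monom_part A (degree g0) + range (\<lambda>r. r * lead_coeff g0)"
proof -
  have U: "is_ideal (monom_part A k)" for k by (rule is_ideal_monom_part[OF A])
  have gen_U: "gen_part J (G - {g0}) k \<subseteq> monom_part A k" for k
    using G by (intro gen_part_subset_monom_part[OF A]) (auto simp: monomial_set_def)
  show "J k \<inter> I \<subseteq> monom_part A k" if "k < degree g0"
  proof -
    have "gen_part J G k \<subseteq> monom_part A k" using gen_part_remove_low[OF that] gen_U by blast
    then have "gen_part J G k + Z k \<subseteq> monom_part A k" by (rule set_plus_subset_ideal[OF U _ Z_A])
    with cover show ?thesis by blast
  qed
  let ?d = "degree g0" and ?W = "monom_part A (degree g0) + range (\<lambda>r. r * lead_coeff g0)"
  have "gen_part J G ?d \<subseteq> ?W"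
    using gen_part_remove[of J G ?d g0] set_plus_mono2[OF gen_U order_refl] by (rule subset_trans)
  moreover have "0 \<in> range (\<lambda>r. r * lead_coeff g0)" by (metis mult_zero_left rangeI)
  then have "monom_part A ?d \<subseteq> ?W" by (rule set_plus_zero_superset)
  then have "Z ?d \<subseteq> ?W" using Z_A[of ?d] by blast
  ultimately have "gen_part J G ?d + Z ?d \<subseteq> ?W"
    by (rule set_plus_subset_ideal[OF is_ideal_set_plus[OF U is_ideal_principal]])
  with cover show "J ?d \<inter> I \<subseteq> ?W" by blast
qed

lemma monomial_generator_redundant:
  assumes m: "is_ideal m" and m_unit: "\<And>a. a \<in> m \<Longrightarrow> \<exists>b. (1 - a) * b = 1"
    and Z: "graded_ideals J Z" and G: "monomial_set G"
    and lc: "\<And>g. g \<in> G \<Longrightarrow> lead_coeff g \<in> J (degree g) \<inter> I + Z (degree g)"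
    and cover: "\<And>n. J n \<inter> I \<subseteq> gen_part J G n + Z n"
    and g0: "g0 \<in> G"
    and not_excess: "J (degree g0) \<inter> I \<subseteq> MN_part J I m (degree g0) + Z (degree g0)"
  shows "g0 \<in> sub_gen (rees J) (G - {g0}) + poly_in Z"
proof -
  define A where "A = sub_gen (rees J) (G - {g0}) + poly_in Z"
  let ?d = "degree g0" and ?c = "lead_coeff g0"
  have A: "submodule_of (rees J) A"
    unfolding A_def
    by (intro submodule_of_set_plus submodule_of_rees_sub_gen submodule_of_poly_in[OF Z])
  have U: "is_ideal (monom_part A k)" for k by (rule is_ideal_monom_part[OF A])
  have "poly_in Z \<subseteq> A" unfolding A_def by (intro set_zero_plus2 zero_in_rees_sub_gen)
  then have Z_U: "Z k \<subseteq> monom_part A k" for k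
    unfolding monom_part_def using poly_in_monom_iff[OF Z] by blast
  have "0 \<in> poly_in Z" using submodule_of_poly_in[OF Z] by (simp add: submodule_of_def)
  have "G - {g0} \<subseteq> sub_gen (rees J) (G - {g0})" by (rule sub_gen_rees_superset)
  also have "\<dots> \<subseteq> A" unfolding A_def by (rule set_plus_zero_superset) fact
  finally have "G - {g0} \<subseteq> A" .
  note cover_A = inter_subset_monom_part_without_generator[OF A G this Z_U cover]
  let ?Wm = "monom_part A ?d + (\<lambda>a. a * ?c) ` m"
  have Wm: "is_ideal ?Wm" by (intro is_ideal_set_plus U is_ideal_mult_image m)
  have "0 \<in> (\<lambda>a. a * ?c) ` m" using is_ideal_zero[OF m] by force
  then have "monom_part A ?d \<subseteq> ?Wm" by (rule set_plus_zero_superset)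
  then have Z_Wm: "Z ?d \<subseteq> ?Wm" using Z_U[of ?d] by blast
  have "MN_part J I m ?d \<subseteq> ?Wm" by (rule MN_part_subset_monom_part[OF A m cover_A])
  then have "MN_part J I m ?d + Z ?d \<subseteq> ?Wm" using Z_Wm by (rule set_plus_subset_ideal[OF Wm])
  then have "J ?d \<inter> I \<subseteq> ?Wm" using not_excess by blast
  then have "J ?d \<inter> I + Z ?d \<subseteq> ?Wm" using Z_Wm by (rule set_plus_subset_ideal[OF Wm])
  then have "?c \<in> ?Wm" using lc[OF g0] by blast
  then have "?c \<in> monom_part A ?d" using nakayama_mem[OF U[of ?d] m_unit] by blast
  moreover have "g0 = monom ?c ?d" using G g0 unfolding monomial_set_def by blast
  ultimately show ?thesis by (simp add: monom_part_def A_def)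
qed

lemma not_excess_if_no_generator:
  assumes Z: "graded_ideals J Z"
    and lc: "\<And>g. g \<in> G \<Longrightarrow> lead_coeff g \<in> J (degree g) \<inter> I + Z (degree g)"
    and cover: "J n \<inter> I \<subseteq> gen_part J G n + Z n"
    and n: "n \<notin> degree ` G"
  shows "J n \<inter> I \<subseteq> MN_part J I m n + Z n"
proof -
  define T where "T = MN_part J I m n + Z n"
  have T: "is_ideal T"
    unfolding T_def using Z
    by (intro is_ideal_set_plus is_ideal_MN_part) (simp add: graded_ideals_def)
  have Z_T: "Z n \<subseteq> T"
    unfolding T_def using is_ideal_zero[OF is_ideal_MN_part] by (rule set_zero_plus2)
  have "gen_part J G n \<subseteq> T"
  proof (rule gen_part_subset[OF T])
    fix g a assume g: "g \<in> G" "degree g \<le> n" and a: "a \<in> J (n - degree g)"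
    have lt: "degree g < n" using g n by (metis image_eqI order_le_less)
    obtain x z where x: "x \<in> J (degree g) \<inter> I" and z: "z \<in> Z (degree g)"
      and lc_eq: "lead_coeff g = x + z"
      using lc[OF g(1)] by (auto elim!: set_plus_elim)
    have "a * x \<in> MN_part J I m n"
      using lt a x by (intro MN_part_positive[where k = "n - degree g"]) auto
    moreover have "a * z \<in> Z n"
      using Z a z g(2) unfolding graded_ideals_def by (metis le_add_diff_inverse2)
    ultimately show "a * lead_coeff g \<in> T"
      unfolding T_def lc_eq distrib_left by (rule set_plus_intro)
  qed
  then have "gen_part J G n + Z n \<subseteq> T" by (rule set_plus_subset_ideal[OF T _ Z_T])
  with cover show ?thesis unfolding T_def by blast
qed

lemma degrees_of_minimal_generators:
  assumes I: "is_ideal I" and m: "is_ideal m"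
    and m_unit: "\<And>a. a \<in> m \<Longrightarrow> \<exists>b. (1 - a) * b = 1"
    and Z: "graded_ideals J Z" and G: "monomial_set G"
    and gen: "sub_gen (rees J) G + poly_in Z = rees_part J I + poly_in Z"
    and minimal: "\<And>g. g \<in> G \<Longrightarrow> g \<notin> sub_gen (rees J) (G - {g}) + poly_in Z"
  shows "degree ` G = excess_degrees J I m Z"
proof -
  have "0 \<in> poly_in Z" using submodule_of_poly_in[OF Z] by (simp add: submodule_of_def)
  then have gen_sub: "sub_gen (rees J) G \<subseteq> rees_part J I + poly_in Z"
    unfolding gen[symmetric] by (rule set_plus_zero_superset)
  have lc: "lead_coeff g \<in> J (degree g) \<inter> I + Z (degree g)" if "g \<in> G" for g
    using that gen_sub sub_gen_rees_superset
    by (intro coeff_set_plus_poly_in[of g "rees_part J I"]) (auto simp: rees_part_def rees_def)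
  have cover: "J n \<inter> I \<subseteq> gen_part J G n + Z n" for n
  proof
    fix x assume "x \<in> J n \<inter> I"
    then have "monom x n \<in> rees_part J I"
      using graded_ideals_inter[OF graded_ideals_filtration I]
      by (simp add: rees_part_eq_poly_in poly_in_monom_iff)
    then have "monom x n \<in> sub_gen (rees J) G + poly_in Z"
      unfolding gen by (rule subsetD[OF set_plus_zero_superset[OF \<open>0 \<in> poly_in Z\<close>]])
    then have "coeff (monom x n) n \<in> gen_part J G n + Z n"
      using coeff_sub_gen_in_gen_part[OF G] by (rule coeff_set_plus_poly_in)
    then show "x \<in> gen_part J G n + Z n" by simp
  qed
  show ?thesis
  proof (intro set_eqI iffI)
    fix n assume "n \<in> degree ` G"
    then obtain g where g: "g \<in> G" "n = degree g" by blast
    show "n \<in> excess_degrees J I m Z"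
      using monomial_generator_redundant[OF m m_unit Z G lc cover g(1)] minimal[OF g(1)] g(2)
      by (auto simp: excess_degrees_def)
  next
    fix n assume "n \<in> excess_degrees J I m Z"
    then show "n \<in> degree ` G"
      using not_excess_if_no_generator[OF Z lc cover] by (auto simp: excess_degrees_def)
  qed
qed

end

section \<open>Minimal homogeneous generating sets\<close>

definition Max0 :: "nat set \<Rightarrow> nat" where
  "Max0 S = (if S = {} then 0 else Max S)"

lemma Max0_eq_if_cofinal:
  assumes "finite A" "B \<subseteq> A" "\<And>a. a \<in> A \<Longrightarrow> \<exists>b\<in>B. a \<le> b"
  shows "Max0 A = Max0 B"
proof (cases "A = {}")
  case False
  then have "Max A \<in> A" using assms(1) by simp
  then obtain b where "b \<in> B" "Max A \<le> b" using assms(3) by blast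
  then have "Max A \<le> Max B" using assms(1,2) finite_subset Max_ge le_trans by metis
  moreover have "Max B \<le> Max A" using \<open>b \<in> B\<close> assms(1,2) by (intro Max_mono) auto
  ultimately show ?thesis using \<open>b \<in> B\<close> False by (auto simp: Max0_def)
qed (use assms(2) in \<open>simp add: Max0_def\<close>)

lemma d_rees_eq_Max0:
  assumes "rees_min_hgens J A G" "\<And>G. rees_min_hgens J A G \<Longrightarrow> degree ` G = D"
  shows "d_rees J A = Max0 D"
  using someI[of "rees_min_hgens J A", OF assms(1)] assms(2)
  unfolding d_rees_def Max0_def Let_def by fastforce

lemma d_gr_eq_Max0:
  assumes "gr_min_hgens J Q H" "\<And>H. gr_min_hgens J Q H \<Longrightarrow> gr_deg J ` H = D"
  shows "d_gr J Q = Max0 D"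
  using someI[of "gr_min_hgens J Q", OF assms(1)] assms(2)
  unfolding d_gr_def Max0_def Let_def by fastforce

locale filtered_ring_with_ideal = filtered_ring J for J :: "nat \<Rightarrow> 'a::comm_ring_1 set" +
  fixes I :: "'a set"
  assumes is_ideal_I: "is_ideal I"
begin

lemma graded_ideals_rees_part: "graded_ideals J (\<lambda>n. J n \<inter> I)"
  by (rule graded_ideals_inter[OF graded_ideals_filtration is_ideal_I])

lemma monom_in_rees_part_iff: "monom c n \<in> rees_part J I \<longleftrightarrow> c \<in> J n \<inter> I"
  by (simp add: rees_part_eq_poly_in poly_in_monom_iff[OF graded_ideals_rees_part])

lemma submodule_of_rees_part: "submodule_of (rees J) (rees_part J I)"
  unfolding rees_part_eq_poly_in by (rule submodule_of_poly_in[OF graded_ideals_rees_part])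

lemma finite_monomial_generators:
  assumes "noetherian_sub (rees J)"
  obtains G where "finite G" "G \<subseteq> rees_part J I"
    "\<And>g. g \<in> G \<Longrightarrow> g \<noteq> 0 \<and> (\<exists>c n. g = monom c n)" "sub_gen (rees J) G = rees_part J I"
proof -
  have "sub_ideal (rees J) (rees_part J I)"
    using submodule_of_rees_part unfolding sub_ideal_def submodule_of_def
    by (auto simp: rees_part_def)
  then obtain G0 where G0: "finite G0" "G0 \<subseteq> rees_part J I" "sub_gen (rees J) G0 = rees_part J I"
    using assms unfolding noetherian_sub_def by blast
  define G where "G = (\<lambda>(p, k). monom (coeff p k) k) ` (SIGMA p:G0. {..degree p}) - {0}"
  have fin: "finite G" unfolding G_def using G0(1) by auto
  have "monom (coeff p k) k \<in> rees_part J I" if "p \<in> rees_part J I" for p k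
    using that unfolding monom_in_rees_part_iff by (simp add: rees_part_def rees_def)
  then have G_sub: "G \<subseteq> rees_part J I" using G0(2) by (auto simp: G_def)
  have G_monom: "g \<noteq> 0 \<and> (\<exists>c n. g = monom c n)" if "g \<in> G" for g
    using that by (auto simp: G_def)
  have "G0 \<subseteq> sub_gen (rees J) G"
  proof
    fix p assume p: "p \<in> G0"
    show "p \<in> sub_gen (rees J) G"
    proof (rule mem_submodule_if_monoms[OF submodule_of_rees_sub_gen])
      fix k
      show "monom (coeff p k) k \<in> sub_gen (rees J) G"
      proof (cases "coeff p k = 0")
        case False
        then have "monom (coeff p k) k \<in> G"
          using p le_degree unfolding G_def by (auto intro!: image_eqI[of _ _ "(p, k)"])
        then show ?thesis using sub_gen_rees_superset by blast
      qed (simp add: zero_in_rees_sub_gen)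
    qed
  qed
  then have "sub_gen (rees J) G = rees_part J I"
    using G0(3) sub_gen_least[OF submodule_of_rees_sub_gen]
      sub_gen_least[OF submodule_of_rees_part G_sub]
    by blast
  with fin G_sub G_monom show ?thesis by (rule that)
qed

lemma rees_min_hgens_exists:
  assumes "noetherian_sub (rees J)"
  obtains G where "finite G" "rees_min_hgens J (rees_part J I) G"
proof -
  obtain G1 where G1: "finite G1" "G1 \<subseteq> rees_part J I"
    "\<And>g. g \<in> G1 \<Longrightarrow> g \<noteq> 0 \<and> (\<exists>c n. g = monom c n)" "sub_gen (rees J) G1 = rees_part J I"
    using finite_monomial_generators[OF assms] by blast
  obtain G where "G \<subseteq> G1" "sub_gen (rees J) G = rees_part J I"
    "\<And>C. C \<subset> G \<Longrightarrow> sub_gen (rees J) C \<noteq> rees_part J I"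
    using exists_minimal_subset[of G1 "\<lambda>G. sub_gen (rees J) G = rees_part J I"] G1(1,4) by blast
  then have "rees_min_hgens J (rees_part J I) G"
    using G1(2,3) unfolding rees_min_hgens_def by blast
  moreover have "finite G" using \<open>G \<subseteq> G1\<close> G1(1) by (rule finite_subset)
  ultimately show ?thesis using that by blast
qed

lemma rees_min_hgens_degrees:
  assumes m: "is_ideal m" and m_unit: "\<And>a. a \<in> m \<Longrightarrow> \<exists>b. (1 - a) * b = 1"
    and G: "rees_min_hgens J (rees_part J I) G"
  shows "degree ` G = excess_degrees J I m (\<lambda>_. {0})"
proof (rule degrees_of_minimal_generators[OF is_ideal_I m m_unit graded_ideals_zero])
  show "monomial_set G" using G unfolding rees_min_hgens_def by (intro monomial_set_if_monoms) blast
  show "sub_gen (rees J) G + poly_in (\<lambda>_. {0}) = rees_part J I + poly_in (\<lambda>_. {0})"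
    using G by (simp add: poly_in_zero rees_min_hgens_def)
  fix g assume g: "g \<in> G"
  show "g \<notin> sub_gen (rees J) (G - {g}) + poly_in (\<lambda>_. {0})"
  proof
    assume "g \<in> sub_gen (rees J) (G - {g}) + poly_in (\<lambda>_. {0})"
    then have "G \<subseteq> sub_gen (rees J) (G - {g})"
      using sub_gen_rees_superset[of "G - {g}"] by (auto simp: poly_in_zero)
    then have "sub_gen (rees J) G \<subseteq> sub_gen (rees J) (G - {g})"
      by (rule sub_gen_least[OF submodule_of_rees_sub_gen])
    moreover have "sub_gen (rees J) (G - {g}) \<subseteq> sub_gen (rees J) G" by (rule sub_gen_mono) blast
    ultimately have "sub_gen (rees J) (G - {g}) = rees_part J I"
      using G unfolding rees_min_hgens_def by (metis subset_antisym)
    moreover have "G - {g} \<subset> G" using g by blast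
    ultimately show False using G unfolding rees_min_hgens_def by (metis (no_types))
  qed
qed

lemma gr_min_hgens_exists:
  assumes "noetherian_sub (rees J)"
  obtains H where "gr_min_hgens J (in_F J I) H"
proof -
  obtain G where G: "finite G" "G \<subseteq> rees_part J I"
    "\<And>g. g \<in> G \<Longrightarrow> g \<noteq> 0 \<and> (\<exists>c n. g = monom c n)" "sub_gen (rees J) G = rees_part J I"
    using finite_monomial_generators[OF assms] by blast
  have G_rees: "G \<subseteq> rees J" using G(2) by (auto simp: rees_part_def)
  define H1 where "H1 = gr_proj J ` (G - gr_kernel J)"
  have H1_gen: "gr_gen J H1 = gr_proj J ` sub_gen (rees J) (G - gr_kernel J)"
    unfolding H1_def using G_rees by (intro gr_gen_gr_proj_image) blast
  also have "\<dots> = in_F J I"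
    using G(4) in_F_eq_gr_proj_image[OF is_ideal_I] by (simp add: gr_proj_sub_gen_diff_gr_kernel)
  finally have gen: "gr_gen J H1 = in_F J I" .
  have "finite H1" using G(1) by (simp add: H1_def)
  then obtain H where H: "H \<subseteq> H1" "gr_gen J H = in_F J I"
    "\<And>C. C \<subset> H \<Longrightarrow> gr_gen J C \<noteq> in_F J I"
    using exists_minimal_subset[of H1 "\<lambda>H. gr_gen J H = in_F J I"] gen by blast
  have H1_homog: "h \<noteq> gr_zero J \<and> (\<exists>d. gr_homog J h d)" if h: "h \<in> H1" for h
  proof -
    obtain g where g: "g \<in> G" "g \<notin> gr_kernel J" "h = gr_proj J g"
      using h by (auto simp: H1_def)
    then obtain c n where g_eq: "g = monom c n" using G(3) by blast
    then have "c \<in> J n" using g(1) G_rees rees_monom by blast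
    then show ?thesis
      using g gr_proj_monom_homog gr_proj_eq_zero_iff by (auto simp: g_eq)
  qed
  have "H1 \<subseteq> gr_proj J ` sub_gen (rees J) (G - gr_kernel J)"
    unfolding H1_def by (intro image_mono sub_gen_rees_superset)
  then have "H1 \<subseteq> in_F J I" using gen H1_gen by simp
  then have "gr_min_hgens J (in_F J I) H"
    unfolding gr_min_hgens_def using H H1_homog by blast
  then show ?thesis by (rule that)
qed

lemma gr_min_hgens_degrees:
  assumes m: "is_ideal m" and m_unit: "\<And>a. a \<in> m \<Longrightarrow> \<exists>b. (1 - a) * b = 1"
    and H: "gr_min_hgens J (in_F J I) H"
  shows "gr_deg J ` H = excess_degrees J I m (\<lambda>n. J (Suc n))"
proof -
  have homog: "\<And>h. h \<in> H \<Longrightarrow> h \<noteq> gr_zero J \<and> (\<exists>d. gr_homog J h d)"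
    and gen: "gr_gen J H = in_F J I" and minimal: "\<And>H'. H' \<subset> H \<Longrightarrow> gr_gen J H' \<noteq> in_F J I"
    using H unfolding gr_min_hgens_def by blast+
  obtain \<rho> where
    \<rho>: "\<And>h. h \<in> H \<Longrightarrow> \<rho> h \<in> rees J \<and> gr_proj J (\<rho> h) = h \<and> degree (\<rho> h) = gr_deg J h"
    and monomial: "monomial_set (\<rho> ` H)"
    using homogeneous_monomial_lift[OF homog] by blast
  have "gr_gen J H = gr_proj J ` sub_gen (rees J) (\<rho> ` H)"
    using \<rho> by (intro gr_gen_eq_gr_proj_sub_gen) blast
  then have gen_\<rho>: "sub_gen (rees J) (\<rho> ` H) + gr_kernel J = rees_part J I + gr_kernel J"
    using gen in_F_eq_gr_proj_image[OF is_ideal_I] by (simp add: gr_proj_image_eq_iff)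
  have "degree ` \<rho> ` H = excess_degrees J I m (\<lambda>n. J (Suc n))"
  proof (rule degrees_of_minimal_generators
      [OF is_ideal_I m m_unit graded_ideals_shift monomial gen_\<rho>])
    fix g assume "g \<in> \<rho> ` H"
    then obtain h0 where h0: "h0 \<in> H" "g = \<rho> h0" by blast
    show "g \<notin> sub_gen (rees J) (\<rho> ` H - {g}) + gr_kernel J"
    proof
      assume "g \<in> sub_gen (rees J) (\<rho> ` H - {g}) + gr_kernel J"
      then have "gr_gen J (H - {h0}) = in_F J I"
        using gr_gen_remove_if_lift_redundant[of H \<rho> h0] \<rho> h0 gen by auto
      then show False using minimal[of "H - {h0}"] h0(1) by blast
    qed
  qed
  moreover have "degree ` \<rho> ` H = gr_deg J ` H"
    using \<rho> by (auto simp: image_image intro!: image_cong)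
  ultimately show ?thesis by simp
qed

section \<open>Comparing the two degree sets\<close>

lemma MN_part_subset_inter: "MN_part J I m n \<subseteq> J n \<inter> I"
proof (rule MN_part_subset)
  show "is_ideal (J n \<inter> I)" using graded_ideals_rees_part by (simp add: graded_ideals_def)
  show "a * b \<in> J n \<inter> I" if "a \<in> m" "b \<in> J n \<inter> I" for a b
    using that filtration_ideal is_ideal_I by (simp add: is_ideal_mult)
  show "a * b \<in> J n \<inter> I" if "k \<le> n" "a \<in> J k" "b \<in> J (n - k) \<inter> I" for a b k
    using that filtration_mult[of a k b "n - k"] is_ideal_I by (simp add: is_ideal_mult)
qed

lemma MN_part_antimono:
  assumes "J 1 \<subseteq> m" "k \<le> l"
  shows "MN_part J I m l \<subseteq> MN_part J I m k"
  using assms(2)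
proof (induction rule: dec_induct)
  case (step l)
  have "MN_part J I m (Suc l) \<subseteq> MN_part J I m l"
  proof (rule MN_part_subset[OF is_ideal_MN_part])
    show "a * b \<in> MN_part J I m l" if "a \<in> m" "b \<in> J (Suc l) \<inter> I" for a b
      using that filtration_antimono[of l "Suc l"] by (auto intro: MN_part_max)
    show "a * b \<in> MN_part J I m l"
      if "1 \<le> i" "i \<le> Suc l" "a \<in> J i" "b \<in> J (Suc l - i) \<inter> I" for a b i
    proof (cases "i = 1")
      case True
      then show ?thesis using that assms(1) by (auto intro: MN_part_max)
    next
      case False
      then have "a \<in> J (i - 1)" using that filtration_antimono[of "i - 1" i] by auto
      then show ?thesis using that False by (intro MN_part_positive[where k = "i - 1"]) auto
    qed
  qed
  with step.IH show ?case by blast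
qed simp

lemma excess_gr_subset_excess_rees:
  "excess_degrees J I m (\<lambda>n. J (Suc n)) \<subseteq> excess_degrees J I m (\<lambda>_. {0})"
  unfolding excess_degrees_def
  using set_plus_zero_superset[OF is_ideal_zero[OF filtration_ideal]] by auto

lemma inter_subset_MN_part_plus_deeper:
  assumes J1: "J 1 \<subseteq> m"
    and no_excess: "\<And>k. n \<le> k \<Longrightarrow> J k \<inter> I \<subseteq> MN_part J I m k + J (Suc k)"
  shows "J n \<inter> I \<subseteq> MN_part J I m n + J (n + j) \<inter> I"
proof (induction j)
  case 0
  show ?case
    using set_zero_plus2[OF is_ideal_zero[OF is_ideal_MN_part], of "J n \<inter> I" J I m n] by simp
next
  case (Suc j)
  have descend: "J (n + j) \<inter> I \<subseteq> MN_part J I m (n + j) + J (Suc (n + j)) \<inter> I"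
  proof
    fix x assume x: "x \<in> J (n + j) \<inter> I"
    then obtain p y where p: "p \<in> MN_part J I m (n + j)" and y: "y \<in> J (Suc (n + j))"
      and x_eq: "x = p + y"
      using no_excess[of "n + j"] by (auto elim!: set_plus_elim)
    have "p \<in> I" using p MN_part_subset_inter by blast
    then have "y \<in> I" using x x_eq is_ideal_diff[OF is_ideal_I, of x p] by simp
    then show "x \<in> MN_part J I m (n + j) + J (Suc (n + j)) \<inter> I" using p y x_eq by blast
  qed
  have "MN_part J I m (n + j) \<subseteq> MN_part J I m n" by (rule MN_part_antimono[OF J1]) simp
  then have "MN_part J I m (n + j) + J (Suc (n + j)) \<inter> I
      \<subseteq> MN_part J I m n + J (Suc (n + j)) \<inter> I"
    by (rule set_plus_mono2) simp
  with descend have "J (n + j) \<inter> I \<subseteq> MN_part J I m n + J (Suc (n + j)) \<inter> I" by simp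
  then have "MN_part J I m n + J (n + j) \<inter> I
      \<subseteq> MN_part J I m n + (MN_part J I m n + J (Suc (n + j)) \<inter> I)"
    by (rule set_plus_mono2[OF order_refl])
  also have "\<dots> = MN_part J I m n + J (n + Suc j) \<inter> I"
    by (simp add: add.assoc[symmetric] ideal_plus_self[OF is_ideal_MN_part])
  finally show ?case using Suc.IH by blast
qed

lemma excess_degrees_cofinal:
  assumes J1: "J 1 \<subseteq> m" and fin: "finite (excess_degrees J I m (\<lambda>_. {0}))"
    and n: "n \<in> excess_degrees J I m (\<lambda>_. {0})"
  shows "\<exists>k\<ge>n. k \<in> excess_degrees J I m (\<lambda>n. J (Suc n))"
proof (rule ccontr)
  assume "\<not> ?thesis"
  then have approx: "J n \<inter> I \<subseteq> MN_part J I m n + J (n + j) \<inter> I" for j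
    by (intro inter_subset_MN_part_plus_deeper[OF J1]) (auto simp: excess_degrees_def)
  obtain j where "\<forall>k\<in>excess_degrees J I m (\<lambda>_. {0}). k < j"
    using fin finite_nat_bounded by blast
  then have "J (n + j) \<inter> I \<subseteq> MN_part J I m (n + j)"
    by (auto simp: excess_degrees_def)
  also have "\<dots> \<subseteq> MN_part J I m n" by (rule MN_part_antimono[OF J1]) simp
  finally have "MN_part J I m n + J (n + j) \<inter> I \<subseteq> MN_part J I m n"
    using ideal_plus_self[OF is_ideal_MN_part] set_plus_mono2[OF order_refl] by blast
  then show False using approx[of j] n by (auto simp: excess_degrees_def)
qed

lemma excess_degrees_if_J1_UNIV:
  assumes "J 1 = UNIV"
  shows "excess_degrees J I m (\<lambda>_. {0}) \<subseteq> {0}" and "excess_degrees J I m (\<lambda>n. J (Suc n)) = {}"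
proof -
  have "1 \<in> J n" for n
  proof (induction n)
    case (Suc n)
    then show ?case using filtration_mult[of 1 1 1 n] assms by simp
  qed (simp add: filtration_0)
  then have J_UNIV: "J n = UNIV" for n using filtration_ideal is_ideal_UNIV_iff by blast
  show "excess_degrees J I m (\<lambda>_. {0}) \<subseteq> {0}"
  proof
    fix n assume n: "n \<in> excess_degrees J I m (\<lambda>_. {0})"
    have "J n \<inter> I \<subseteq> MN_part J I m n" if n1: "1 \<le> n"
    proof
      fix x assume "x \<in> J n \<inter> I"
      then have "1 * x \<in> MN_part J I m n"
        using n1 by (intro MN_part_positive[where k = n]) (simp_all add: J_UNIV)
      then show "x \<in> MN_part J I m n" by simp
    qed
    then show "n \<in> {0}" using n by (cases n) (auto simp: excess_degrees_def)
  qed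
  have "UNIV \<subseteq> MN_part J I m n + UNIV" for n
    by (rule set_zero_plus2[OF is_ideal_zero[OF is_ideal_MN_part]])
  then show "excess_degrees J I m (\<lambda>n. J (Suc n)) = {}"
    by (auto simp: excess_degrees_def J_UNIV)
qed

lemma ar_eq_Max0_excess_degrees:
  assumes "noetherian_sub (rees J)" "is_ideal m" "\<And>a. a \<in> m \<Longrightarrow> \<exists>b. (1 - a) * b = 1"
  shows "ar J I = Max0 (excess_degrees J I m (\<lambda>_. {0}))"
proof -
  obtain G where "rees_min_hgens J (rees_part J I) G"
    using rees_min_hgens_exists[OF assms(1)] by blast
  then show ?thesis
    unfolding ar_def using rees_min_hgens_degrees[OF assms(2,3)] by (rule d_rees_eq_Max0)
qed

lemma finite_excess_degrees:
  assumes "noetherian_sub (rees J)" "is_ideal m" "\<And>a. a \<in> m \<Longrightarrow> \<exists>b. (1 - a) * b = 1"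
  shows "finite (excess_degrees J I m (\<lambda>_. {0}))"
proof -
  obtain G where "finite G" "rees_min_hgens J (rees_part J I) G"
    using rees_min_hgens_exists[OF assms(1)] by blast
  then show ?thesis using rees_min_hgens_degrees[OF assms(2,3)] by (metis finite_imageI)
qed

lemma d_gr_in_F_eq_Max0_excess_degrees:
  assumes "noetherian_sub (rees J)" "is_ideal m" "\<And>a. a \<in> m \<Longrightarrow> \<exists>b. (1 - a) * b = 1"
  shows "d_gr J (in_F J I) = Max0 (excess_degrees J I m (\<lambda>n. J (Suc n)))"
proof -
  obtain H where "gr_min_hgens J (in_F J I) H"
    using gr_min_hgens_exists[OF assms(1)] by blast
  then show ?thesis using gr_min_hgens_degrees[OF assms(2,3)] by (rule d_gr_eq_Max0)
qed

lemma Max0_excess_degrees_eq: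
  assumes m_max: "\<And>K. is_ideal K \<Longrightarrow> K \<noteq> UNIV \<Longrightarrow> K \<subseteq> m"
    and fin: "finite (excess_degrees J I m (\<lambda>_. {0}))"
  shows "Max0 (excess_degrees J I m (\<lambda>_. {0})) = Max0 (excess_degrees J I m (\<lambda>n. J (Suc n)))"
proof (cases "J 1 = UNIV")
  case True
  then have "excess_degrees J I m (\<lambda>_. {0}) \<subseteq> {0}" "excess_degrees J I m (\<lambda>n. J (Suc n)) = {}"
    by (simp_all add: excess_degrees_if_J1_UNIV)
  then show ?thesis by (auto simp: Max0_def subset_singleton_iff)
next
  case False
  then have "J 1 \<subseteq> m" using m_max filtration_ideal by blast
  then show ?thesis
    using fin excess_gr_subset_excess_rees excess_degrees_cofinal
    by (intro Max0_eq_if_cofinal) blast+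
qed

end

theorem proposition5p5:
  fixes J :: "nat \<Rightarrow> 'a::comm_ring_1 set" and I :: "'a set"
  assumes "noetherian_ring TYPE('a)" and "local_ring TYPE('a)"
    and "noetherian_filtration J"
    and "is_ideal I"
  shows "ar J I = d_gr J (in_F J I)"
proof -
  have F: "filtration J" and noeth: "noetherian_sub (rees J)"
    using assms(3) by (simp_all add: noetherian_filtration_def)
  interpret filtered_ring_with_ideal J I
    by unfold_locales (simp_all add: F assms(4))
  obtain m :: "'a set" where m: "is_ideal m" and m_unit: "\<And>a. a \<in> m \<Longrightarrow> \<exists>b. (1 - a) * b = 1"
    and m_max: "\<And>K. is_ideal K \<Longrightarrow> K \<noteq> UNIV \<Longrightarrow> K \<subseteq> m"
    using local_ring_maximal_ideal[OF assms(2)] by blast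
  have "ar J I = Max0 (excess_degrees J I m (\<lambda>_. {0}))"
    by (rule ar_eq_Max0_excess_degrees[OF noeth m m_unit])
  also have "\<dots> = Max0 (excess_degrees J I m (\<lambda>n. J (Suc n)))"
    by (rule Max0_excess_degrees_eq[OF m_max finite_excess_degrees[OF noeth m m_unit]])
  also have "\<dots> = d_gr J (in_F J I)"
    by (rule d_gr_in_F_eq_Max0_excess_degrees[OF noeth m m_unit, symmetric])
  finally show ?thesis .
qed

end
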